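(* Let $R$ be a local noetherian ring, $C$ a semidualizing $R$-module, and $M$ a finitely generated $R$-module admitting a bounded $\mathcal{P}_C^f$-resolution. Then $M$ admits a minimal $\mathcal{P}_C^f$-resolution.
   Context: An $R$-module $C$ over a noetherian ring $R$ is semidualizing if it is finitely generated, the homothety map $R\to\operatorname{Hom}_R(C,C)$ is an isomorphism, and $\operatorname{Ext}^i_R(C,C)=0$ for all $i\geq 1$. $\mathcal{P}_C^f$ is the class of modules $C\otimes_R P$ with $P$ finitely generated projective (over a local ring, the modules $C^n$). A $\mathcal{P}_C^f$-resolution of $M$ is a complex $X$ with $X_n=0$ for $n<0$, $\operatorname{H}_n(X)=0$ for $n>0$, $\operatorname{H}_0(X)\cong M$, and all $X_n\in\mathcal{P}_C^f$. A complex $B$ is minimal if every homotopy equivalence $B\to B$ is an isomorphism (equivalently, every chain map $B\to B$ homotopic to the identity is an isomorphism). *)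

theory Defs
  imports "HOL-Algebra.Module" "HOL-Algebra.Ring_Divisibility"
begin

definition lin_map :: "('a, 'r) ring_scheme \<Rightarrow> ('a, 'b, 'm1) module_scheme \<Rightarrow> ('a, 'c, 'm2) module_scheme
    \<Rightarrow> ('b \<Rightarrow> 'c) \<Rightarrow> bool" where
  "lin_map R M N f \<longleftrightarrow>
     f \<in> carrier M \<rightarrow> carrier N \<and>
     (\<forall>x\<in>carrier M. \<forall>y\<in>carrier M. f (x \<oplus>\<^bsub>M\<^esub> y) = f x \<oplus>\<^bsub>N\<^esub> f y) \<and>
     (\<forall>r\<in>carrier R. \<forall>x\<in>carrier M. f (r \<odot>\<^bsub>M\<^esub> x) = r \<odot>\<^bsub>N\<^esub> f x)"

definition fin_gen :: "('a, 'r) ring_scheme \<Rightarrow> ('a, 'b, 'm) module_scheme \<Rightarrow> bool" where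
  "fin_gen R M \<longleftrightarrow>
     (\<exists>S. finite S \<and> S \<subseteq> carrier M \<and>
        (\<forall>m\<in>carrier M. \<exists>c \<in> S \<rightarrow> carrier R. m = finsum M (\<lambda>s. c s \<odot>\<^bsub>M\<^esub> s) S))"

definition local_ring :: "('a, 'r) ring_scheme \<Rightarrow> bool" where
  "local_ring R \<longleftrightarrow> cring R \<and> (\<exists>!I. maximalideal I R)"

text \<open>The direct sum M^n, realised as functions nat => M vanishing from index n on.\<close>
definition pow_mod :: "('a, 'b, 'm) module_scheme \<Rightarrow> nat \<Rightarrow> ('a, nat \<Rightarrow> 'b) module" where
  "pow_mod M n =
     \<lparr>carrier = {f. (\<forall>i<n. f i \<in> carrier M) \<and> (\<forall>i. n \<le> i \<longrightarrow> f i = \<zero>\<^bsub>M\<^esub>)},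
      mult = (\<lambda>f g i. \<zero>\<^bsub>M\<^esub>),
      one = (\<lambda>i. \<zero>\<^bsub>M\<^esub>),
      zero = (\<lambda>i. \<zero>\<^bsub>M\<^esub>),
      add = (\<lambda>f g i. f i \<oplus>\<^bsub>M\<^esub> g i),
      smult = (\<lambda>r f i. r \<odot>\<^bsub>M\<^esub> f i)\<rparr>"

definition ring_mod :: "('a, 'r) ring_scheme \<Rightarrow> ('a, 'a) module" where
  "ring_mod R =
     \<lparr>carrier = carrier R, mult = mult R, one = one R, zero = zero R, add = add R,
      smult = mult R\<rparr>"

abbreviation free_mod :: "('a, 'r) ring_scheme \<Rightarrow> nat \<Rightarrow> ('a, nat \<Rightarrow> 'a) module" where
  "free_mod R n \<equiv> pow_mod (ring_mod R) n"

text \<open>An augmented complex  ... -> X_2 -d_2-> X_1 -d_1-> X_0 -e-> N -> 0  with X_k = P^(a k),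
  which is exact everywhere, i.e. a resolution of N (H_k = 0 for k > 0 and H_0 \<cong> N via e).\<close>
definition pow_resolution ::
  "('a, 'r) ring_scheme \<Rightarrow> ('a, 'b, 'm1) module_scheme \<Rightarrow> ('a, 'c, 'm2) module_scheme
     \<Rightarrow> (nat \<Rightarrow> nat) \<Rightarrow> (nat \<Rightarrow> (nat \<Rightarrow> 'b) \<Rightarrow> (nat \<Rightarrow> 'b)) \<Rightarrow> ((nat \<Rightarrow> 'b) \<Rightarrow> 'c) \<Rightarrow> bool" where
  "pow_resolution R P N a d e \<longleftrightarrow>
     (\<forall>n\<ge>1. lin_map R (pow_mod P (a n)) (pow_mod P (a (n - 1))) (d n)) \<and>
     (\<forall>n\<ge>1. {x \<in> carrier (pow_mod P (a n)). d n x = \<zero>\<^bsub>pow_mod P (a (n - 1))\<^esub>}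
               = d (Suc n) ` carrier (pow_mod P (a (Suc n)))) \<and>
     lin_map R (pow_mod P (a 0)) N e \<and>
     e ` carrier (pow_mod P (a 0)) = carrier N \<and>
     {x \<in> carrier (pow_mod P (a 0)). e x = \<zero>\<^bsub>N\<^esub>} = d 1 ` carrier (pow_mod P (a 1))"

text \<open>A P_C^f-resolution of M (over a local ring P_C^f consists of the modules C^n).\<close>
abbreviation PCf_resolution where
  "PCf_resolution R C M a d e \<equiv> pow_resolution R C M a d e"

abbreviation free_resolution where
  "free_resolution R C b d e \<equiv> pow_resolution R (ring_mod R) C b d e"

definition homothety_iso :: "('a, 'r) ring_scheme \<Rightarrow> ('a, 'c, 'm) module_scheme \<Rightarrow> bool" where
  "homothety_iso R C \<longleftrightarrow>
     (\<forall>f. lin_map R C C f \<longrightarrow>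
        (\<exists>!r. r \<in> carrier R \<and> (\<forall>c\<in>carrier C. f c = r \<odot>\<^bsub>C\<^esub> c)))"

text \<open>Ext^i_R(C,C) = 0 for all i >= 1, computed as the cohomology of Hom_R(F,C) for a
  (any) resolution F of C by finitely generated free modules:
  every phi in Hom(F_i,C) with phi o d_(i+1) = 0 is of the form psi o d_i.\<close>
definition ext_self_vanishing :: "('a, 'r) ring_scheme \<Rightarrow> ('a, 'c, 'm) module_scheme \<Rightarrow> bool" where
  "ext_self_vanishing R C \<longleftrightarrow>
     (\<forall>b d e. free_resolution R C b d e \<longrightarrow>
        (\<forall>i\<ge>1. \<forall>\<phi>. lin_map R (free_mod R (b i)) C \<phi> \<and>
                 (\<forall>x\<in>carrier (free_mod R (b (Suc i))). \<phi> (d (Suc i) x) = \<zero>\<^bsub>C\<^esub>) \<longrightarrow>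
              (\<exists>\<psi>. lin_map R (free_mod R (b (i - 1))) C \<psi> \<and>
                    (\<forall>x\<in>carrier (free_mod R (b i)). \<phi> x = \<psi> (d i x)))))"

definition semidualizing :: "('a, 'r) ring_scheme \<Rightarrow> ('a, 'c, 'm) module_scheme \<Rightarrow> bool" where
  "semidualizing R C \<longleftrightarrow>
     module R C \<and> fin_gen R C \<and> homothety_iso R C \<and> ext_self_vanishing R C"

definition bounded_cx :: "('a, 'c, 'm) module_scheme \<Rightarrow> (nat \<Rightarrow> nat) \<Rightarrow> bool" where
  "bounded_cx C a \<longleftrightarrow>
     (\<exists>N. \<forall>n\<ge>N. carrier (pow_mod C (a n)) = {\<zero>\<^bsub>pow_mod C (a n)\<^esub>})"

definition chain_endo ::
  "('a, 'r) ring_scheme \<Rightarrow> ('a, 'c, 'm) module_scheme \<Rightarrow> (nat \<Rightarrow> nat)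
     \<Rightarrow> (nat \<Rightarrow> (nat \<Rightarrow> 'c) \<Rightarrow> (nat \<Rightarrow> 'c)) \<Rightarrow> (nat \<Rightarrow> (nat \<Rightarrow> 'c) \<Rightarrow> (nat \<Rightarrow> 'c)) \<Rightarrow> bool" where
  "chain_endo R C a d \<phi> \<longleftrightarrow>
     (\<forall>n. lin_map R (pow_mod C (a n)) (pow_mod C (a n)) (\<phi> n)) \<and>
     (\<forall>n\<ge>1. \<forall>x\<in>carrier (pow_mod C (a n)). d n (\<phi> n x) = \<phi> (n - 1) (d n x))"

definition cx_homotopic ::
  "('a, 'r) ring_scheme \<Rightarrow> ('a, 'c, 'm) module_scheme \<Rightarrow> (nat \<Rightarrow> nat)
     \<Rightarrow> (nat \<Rightarrow> (nat \<Rightarrow> 'c) \<Rightarrow> (nat \<Rightarrow> 'c))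
     \<Rightarrow> (nat \<Rightarrow> (nat \<Rightarrow> 'c) \<Rightarrow> (nat \<Rightarrow> 'c)) \<Rightarrow> (nat \<Rightarrow> (nat \<Rightarrow> 'c) \<Rightarrow> (nat \<Rightarrow> 'c)) \<Rightarrow> bool" where
  "cx_homotopic R C a d \<phi> \<psi> \<longleftrightarrow>
     (\<exists>s. (\<forall>n. lin_map R (pow_mod C (a n)) (pow_mod C (a (Suc n))) (s n)) \<and>
          (\<forall>n. \<forall>x\<in>carrier (pow_mod C (a n)).
              \<phi> n x = \<psi> n x \<oplus>\<^bsub>pow_mod C (a n)\<^esub> d (Suc n) (s n x)
                        \<oplus>\<^bsub>pow_mod C (a n)\<^esub> (if n = 0 then \<zero>\<^bsub>pow_mod C (a n)\<^esub> else s (n - 1) (d n x))))"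

definition homotopy_equiv ::
  "('a, 'r) ring_scheme \<Rightarrow> ('a, 'c, 'm) module_scheme \<Rightarrow> (nat \<Rightarrow> nat)
     \<Rightarrow> (nat \<Rightarrow> (nat \<Rightarrow> 'c) \<Rightarrow> (nat \<Rightarrow> 'c)) \<Rightarrow> (nat \<Rightarrow> (nat \<Rightarrow> 'c) \<Rightarrow> (nat \<Rightarrow> 'c)) \<Rightarrow> bool" where
  "homotopy_equiv R C a d \<phi> \<longleftrightarrow>
     chain_endo R C a d \<phi> \<and>
     (\<exists>\<psi>. chain_endo R C a d \<psi> \<and>
          cx_homotopic R C a d (\<lambda>n. \<psi> n \<circ> \<phi> n) (\<lambda>n x. x) \<and>
          cx_homotopic R C a d (\<lambda>n. \<phi> n \<circ> \<psi> n) (\<lambda>n x. x))"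

definition minimal_cx ::
  "('a, 'r) ring_scheme \<Rightarrow> ('a, 'c, 'm) module_scheme \<Rightarrow> (nat \<Rightarrow> nat)
     \<Rightarrow> (nat \<Rightarrow> (nat \<Rightarrow> 'c) \<Rightarrow> (nat \<Rightarrow> 'c)) \<Rightarrow> bool" where
  "minimal_cx R C a d \<longleftrightarrow>
     (\<forall>\<phi>. homotopy_equiv R C a d \<phi> \<longrightarrow>
        (\<forall>n. bij_betw (\<phi> n) (carrier (pow_mod C (a n))) (carrier (pow_mod C (a n)))))"

end

theory Submission
  imports Defs
begin

text \<open>Over the local ring \<open>R\<close> with maximal ideal \<open>m\<close>, every endomorphism of \<open>C\<close> is a homothety,
  so an \<open>R\<close>-linear map \<open>C\<^sup>a \<rightarrow> C\<^sup>b\<close> is a matrix over \<open>R\<close>. If all entries of all differentials lie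
  in \<open>m\<close>, then for a homotopy equivalence \<open>\<phi>\<close> with homotopy inverse \<open>\<psi>\<close> the map
  \<open>\<psi>\<phi> = 1 + ds + sd\<close> is the identity modulo \<open>m\<close>; such a matrix is invertible by Gaussian
  elimination, so \<open>\<phi>\<close> is bijective and the resolution is minimal. Otherwise some differential has
  a unit entry; base changes in its source and target turn this entry into a \<open>1 \<times> 1\<close> diagonal
  block, and splitting it off leaves a resolution of smaller total rank. As the resolution is
  bounded, induction on the total rank ends with a minimal resolution.\<close>

lemma pow_mod_carrier:
  "carrier (pow_mod M n) = {f. (\<forall>i<n. f i \<in> carrier M) \<and> (\<forall>i. n \<le> i \<longrightarrow> f i = \<zero>\<^bsub>M\<^esub>)}"
  by (simp add: pow_mod_def)

lemma pow_mod_add: "x \<oplus>\<^bsub>pow_mod M n\<^esub> y = (\<lambda>i. x i \<oplus>\<^bsub>M\<^esub> y i)"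
  by (simp add: pow_mod_def)

lemma pow_mod_zero: "\<zero>\<^bsub>pow_mod M n\<^esub> = (\<lambda>i. \<zero>\<^bsub>M\<^esub>)"
  by (simp add: pow_mod_def)

lemma pow_mod_smult: "r \<odot>\<^bsub>pow_mod M n\<^esub> x = (\<lambda>i. r \<odot>\<^bsub>M\<^esub> x i)"
  by (simp add: pow_mod_def)

lemma (in cring) proper_ideal_in_maximalideal:
  assumes "ideal I R" and "\<one> \<notin> I"
  obtains J where "maximalideal J R" and "I \<subseteq> J"
proof -
  define A where "A = {J. ideal J R \<and> I \<subseteq> J \<and> \<one> \<notin> J}"
  have "\<exists>J\<in>A. \<forall>X\<in>A. J \<subseteq> X \<longrightarrow> X = J"
  proof (rule subset_Zorn)
    fix Ch assume ch: "subset.chain A Ch"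
    show "\<exists>U\<in>A. \<forall>X\<in>Ch. X \<subseteq> U"
    proof (cases "Ch = {}")
      case True
      then show ?thesis using assms unfolding A_def by blast
    next
      case False
      have "subset.chain {J. ideal J R} Ch"
        using ch unfolding subset_chain_def A_def by blast
      then have "ideal (\<Union>Ch) R" using chain_Union_is_ideal[of Ch] False by simp
      moreover have "I \<subseteq> \<Union>Ch" "\<one> \<notin> \<Union>Ch"
        using False ch unfolding subset_chain_def A_def by blast+
      ultimately show ?thesis unfolding A_def by blast
    qed
  qed
  then obtain J where J: "J \<in> A" and J_max: "\<And>X. X \<in> A \<Longrightarrow> J \<subseteq> X \<Longrightarrow> X = J" by blast
  have "maximalideal J R"
  proof (rule maximalidealI)
    show "ideal J R" "carrier R \<noteq> J" using J unfolding A_def by blast+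
    fix K assume K: "ideal K R" "J \<subseteq> K" "K \<subseteq> carrier R"
    show "K = J \<or> K = carrier R"
    proof (cases "\<one> \<in> K")
      case True
      then show ?thesis using ideal.one_imp_carrier[OF K(1)] by blast
    next
      case False
      then show ?thesis using J J_max K unfolding A_def by blast
    qed
  qed
  then show thesis using that J unfolding A_def by blast
qed

lemma (in cring) local_ring_nonmember_Units:
  assumes "maximalideal m R" and "\<And>I. maximalideal I R \<Longrightarrow> I = m"
    and x: "x \<in> carrier R" "x \<notin> m"
  shows "x \<in> Units R"
proof (rule ccontr)
  assume nonunit: "x \<notin> Units R"
  have "\<one> \<notin> PIdl x"
  proof
    assume "\<one> \<in> PIdl x"
    then obtain y where y: "y \<in> carrier R" "\<one> = y \<otimes> x" unfolding cgenideal_def by blast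
    then have "x \<otimes> y = \<one>" "y \<otimes> x = \<one>" using x m_comm by simp_all
    with y(1) x(1) nonunit show False unfolding Units_def by blast
  qed
  then obtain J where "maximalideal J R" "PIdl x \<subseteq> J"
    by (rule proper_ideal_in_maximalideal[OF cgenideal_ideal[OF x(1)]])
  then have "x \<in> m" using assms(2) cgenideal_self[OF x(1)] by blast
  with x(2) show False ..
qed

definition swap_coords :: "nat \<Rightarrow> nat \<Rightarrow> (nat \<Rightarrow> 'b) \<Rightarrow> nat \<Rightarrow> 'b" where
  "swap_coords k l x = (\<lambda>t. x (if t = k then l else if t = l then k else t))"

lemma swap_coords_involution: "swap_coords k l (swap_coords k l x) = x"
  unfolding swap_coords_def by auto

lemma bij_betw_if_comp_bij:
  assumes "f ` A \<subseteq> B" and "g ` B \<subseteq> A" and "bij_betw (g \<circ> f) A A" and "bij_betw (f \<circ> g) B B"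
  shows "bij_betw f A B"
  unfolding bij_betw_def
proof
  show "inj_on f A" using assms(3) unfolding bij_betw_def by (blast intro: inj_on_imageI2)
  have "B = f ` (g ` B)" using assms(4) unfolding bij_betw_def by (simp add: image_comp)
  then show "f ` A = B" using assms(1,2) by blast
qed

section \<open>Matrices over a local ring\<close>

text \<open>Modules over a local ring \<open>R\<close> with maximal ideal \<open>m\<close> whose endomorphisms are the homotheties,
  as semidualizing modules are. Maps \<open>C\<^sup>a \<rightarrow> C\<^sup>b\<close> are then matrices over \<open>R\<close>.\<close>

locale local_homothety_module = module R C for R :: "'a ring" and C :: "('a, 'c) module" +
  fixes m :: "'a set"
  assumes maximal: "maximalideal m R"
    and nonmember_Units: "\<And>x. x \<in> carrier R \<Longrightarrow> x \<notin> m \<Longrightarrow> x \<in> Units R"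
    and homothety: "homothety_iso R C"
begin

sublocale max: maximalideal m R
  by (rule maximal)

lemma one_notin_max: "\<one>\<^bsub>R\<^esub> \<notin> m"
  using max.one_imp_carrier max.I_notcarr by blast

abbreviation Cpow :: "nat \<Rightarrow> (nat \<Rightarrow> 'c) set" where
  "Cpow n \<equiv> carrier (pow_mod C n)"

abbreviation vzero :: "nat \<Rightarrow> 'c" where
  "vzero \<equiv> \<lambda>i. \<zero>\<^bsub>C\<^esub>"

abbreviation vadd :: "(nat \<Rightarrow> 'c) \<Rightarrow> (nat \<Rightarrow> 'c) \<Rightarrow> nat \<Rightarrow> 'c" where
  "vadd x y \<equiv> \<lambda>i. x i \<oplus>\<^bsub>C\<^esub> y i"

abbreviation vsmult :: "'a \<Rightarrow> (nat \<Rightarrow> 'c) \<Rightarrow> nat \<Rightarrow> 'c" where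
  "vsmult r x \<equiv> \<lambda>i. r \<odot>\<^bsub>C\<^esub> x i"

abbreviation vneg :: "(nat \<Rightarrow> 'c) \<Rightarrow> nat \<Rightarrow> 'c" where
  "vneg x \<equiv> \<lambda>i. \<ominus>\<^bsub>C\<^esub> x i"

definition single :: "nat \<Rightarrow> 'c \<Rightarrow> nat \<Rightarrow> 'c" where
  "single i c = (\<lambda>k. if k = i then c else \<zero>\<^bsub>C\<^esub>)"

lemma Cpow_iff: "x \<in> Cpow n \<longleftrightarrow> (\<forall>i<n. x i \<in> carrier C) \<and> (\<forall>i. n \<le> i \<longrightarrow> x i = \<zero>\<^bsub>C\<^esub>)"
  by (simp add: pow_mod_carrier)

lemma Cpow_coord: "x \<in> Cpow n \<Longrightarrow> x i \<in> carrier C"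
  by (cases "i < n") (auto simp: Cpow_iff)

lemma Cpow_mono: "x \<in> Cpow n \<Longrightarrow> n \<le> n' \<Longrightarrow> x \<in> Cpow n'"
  by (auto simp: Cpow_iff) (metis M.zero_closed not_less)

lemma Cpow_0: "Cpow 0 = {vzero}"
  by (auto simp: Cpow_iff)

lemma Cpow_SucD: "x \<in> Cpow (Suc b) \<Longrightarrow> x b = \<zero>\<^bsub>C\<^esub> \<Longrightarrow> x \<in> Cpow b"
  unfolding Cpow_iff by (metis Suc_leI le_less less_Suc_eq)

lemma vzero_Cpow: "vzero \<in> Cpow n"
  by (auto simp: Cpow_iff)

lemma single_Cpow: "c \<in> carrier C \<Longrightarrow> i < n \<Longrightarrow> single i c \<in> Cpow n"
  by (auto simp: Cpow_iff single_def)

lemma vadd_Cpow: "x \<in> Cpow n \<Longrightarrow> y \<in> Cpow n \<Longrightarrow> vadd x y \<in> Cpow n"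
  by (auto simp: Cpow_iff)

lemma vsmult_Cpow: "r \<in> carrier R \<Longrightarrow> x \<in> Cpow n \<Longrightarrow> vsmult r x \<in> Cpow n"
  by (auto simp: Cpow_iff)

lemma vneg_Cpow: "x \<in> Cpow n \<Longrightarrow> vneg x \<in> Cpow n"
  by (auto simp: Cpow_iff)

lemma fun_upd_Cpow: "x \<in> Cpow (Suc b) \<Longrightarrow> x(b := \<zero>\<^bsub>C\<^esub>) \<in> Cpow b"
  by (auto simp: Cpow_iff)

lemma Cpow_Suc_decomp: "x \<in> Cpow (Suc b) \<Longrightarrow> x = vadd (x(b := \<zero>\<^bsub>C\<^esub>)) (single b (x b))"
  by (rule ext) (simp add: single_def Cpow_coord)

lemma single_add: "c \<in> carrier C \<Longrightarrow> c' \<in> carrier C \<Longrightarrow> single i (c \<oplus>\<^bsub>C\<^esub> c') = vadd (single i c) (single i c')"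
  by (auto simp: single_def)

lemma single_smult: "r \<in> carrier R \<Longrightarrow> c \<in> carrier C \<Longrightarrow> single i (r \<odot>\<^bsub>C\<^esub> c) = vsmult r (single i c)"
  by (auto simp: single_def)

lemma abelian_group_pow_mod: "abelian_group (pow_mod C n)"
proof (rule abelian_groupI, unfold pow_mod_add pow_mod_zero)
  fix x y z assume x: "x \<in> Cpow n" and y: "y \<in> Cpow n" and z: "z \<in> Cpow n"
  show "vadd x y \<in> Cpow n" by (rule vadd_Cpow[OF x y])
  show "vadd (vadd x y) z = vadd x (vadd y z)"
    by (rule ext) (use x y z in \<open>simp add: M.a_assoc Cpow_coord\<close>)
  show "vadd x y = vadd y x"
    by (rule ext) (use x y in \<open>simp add: M.a_comm Cpow_coord\<close>)
  show "vadd vzero x = x"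
    by (rule ext) (use x in \<open>simp add: Cpow_coord\<close>)
  show "\<exists>y\<in>Cpow n. vadd y x = vzero"
  proof
    show "vadd (vneg x) x = vzero"
      by (rule ext) (use x in \<open>simp add: M.l_neg Cpow_coord\<close>)
  qed (rule vneg_Cpow[OF x])
next
  show "vzero \<in> Cpow n" by (rule vzero_Cpow)
qed

definition lmap :: "nat \<Rightarrow> nat \<Rightarrow> ((nat \<Rightarrow> 'c) \<Rightarrow> nat \<Rightarrow> 'c) \<Rightarrow> bool" where
  "lmap a b f \<longleftrightarrow> f \<in> Cpow a \<rightarrow> Cpow b \<and>
     (\<forall>x\<in>Cpow a. \<forall>y\<in>Cpow a. f (vadd x y) = vadd (f x) (f y)) \<and>
     (\<forall>r\<in>carrier R. \<forall>x\<in>Cpow a. f (vsmult r x) = vsmult r (f x))"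

lemma lin_map_pow_mod_iff: "lin_map R (pow_mod C a) (pow_mod C b) f \<longleftrightarrow> lmap a b f"
  unfolding lin_map_def lmap_def pow_mod_add pow_mod_smult ..

lemma lmap_closed: "lmap a b f \<Longrightarrow> x \<in> Cpow a \<Longrightarrow> f x \<in> Cpow b"
  by (auto simp: lmap_def)

lemma lmap_add: "lmap a b f \<Longrightarrow> x \<in> Cpow a \<Longrightarrow> y \<in> Cpow a \<Longrightarrow> f (vadd x y) = vadd (f x) (f y)"
  by (auto simp: lmap_def)

lemma lmap_smult: "lmap a b f \<Longrightarrow> r \<in> carrier R \<Longrightarrow> x \<in> Cpow a \<Longrightarrow> f (vsmult r x) = vsmult r (f x)"
  by (auto simp: lmap_def)

lemma lmap_coord_add:
  "lmap a b f \<Longrightarrow> x \<in> Cpow a \<Longrightarrow> y \<in> Cpow a \<Longrightarrow> f (vadd x y) j = f x j \<oplus>\<^bsub>C\<^esub> f y j"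
  by (simp add: lmap_add)

lemma lmap_zero:
  assumes "lmap a b f"
  shows "f vzero = vzero"
proof -
  have "f vzero = f (vsmult \<zero>\<^bsub>R\<^esub> vzero)" by simp
  also have "\<dots> = vsmult \<zero>\<^bsub>R\<^esub> (f vzero)" by (rule lmap_smult[OF assms R.zero_closed vzero_Cpow])
  also have "\<dots> = vzero" using Cpow_coord[OF lmap_closed[OF assms vzero_Cpow]] by simp
  finally show ?thesis .
qed

lemma lmap_neg:
  assumes "lmap a b f" and x: "x \<in> Cpow a"
  shows "f (vneg x) = vneg (f x)"
proof -
  have "vneg y = vsmult (\<ominus>\<^bsub>R\<^esub> \<one>\<^bsub>R\<^esub>) y" if "y \<in> Cpow n" for y n
    using Cpow_coord[OF that] by (simp add: smult_l_minus)
  then show ?thesis using lmap_smult[OF assms(1) _ x] lmap_closed[OF assms] x by simp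
qed

lemma lmap_comp: "lmap a b f \<Longrightarrow> lmap b c g \<Longrightarrow> lmap a c (\<lambda>x. g (f x))"
  unfolding lmap_def by (auto simp: Pi_def vadd_Cpow vsmult_Cpow)

lemma lmap_id: "a \<le> b \<Longrightarrow> lmap a b (\<lambda>x. x)"
  unfolding lmap_def by (auto intro: Cpow_mono)

lemma lmap_restrict:
  assumes "lmap a b f" and "a' \<le> a"
  shows "lmap a' b f"
proof -
  have "Cpow a' \<subseteq> Cpow a" using Cpow_mono assms(2) by blast
  then show ?thesis using assms(1) unfolding lmap_def Pi_iff by blast
qed

lemma lmap_codom: "lmap a b f \<Longrightarrow> (\<And>x. x \<in> Cpow a \<Longrightarrow> f x \<in> Cpow b') \<Longrightarrow> lmap a b' f"
  unfolding lmap_def by blast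

lemma lmap_vadd:
  assumes f: "lmap a b f" and g: "lmap a b g"
  shows "lmap a b (\<lambda>x. vadd (f x) (g x))"
  unfolding lmap_def
proof (intro conjI ballI Pi_I)
  fix x assume "x \<in> Cpow a"
  then show "vadd (f x) (g x) \<in> Cpow b" by (intro vadd_Cpow lmap_closed[OF f] lmap_closed[OF g])
next
  fix x y assume x: "x \<in> Cpow a" and y: "y \<in> Cpow a"
  have "f x i \<in> carrier C" "g x i \<in> carrier C" "f y i \<in> carrier C" "g y i \<in> carrier C" for i
    using x y by (auto intro: Cpow_coord lmap_closed[OF f] lmap_closed[OF g])
  then show "vadd (f (vadd x y)) (g (vadd x y)) = vadd (vadd (f x) (g x)) (vadd (f y) (g y))"
    using lmap_add[OF f x y] lmap_add[OF g x y] by (simp add: M.a_ac)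
next
  fix r x assume r: "r \<in> carrier R" and x: "x \<in> Cpow a"
  have "f x i \<in> carrier C" "g x i \<in> carrier C" for i
    using x by (auto intro: Cpow_coord lmap_closed[OF f] lmap_closed[OF g])
  then show "vadd (f (vsmult r x)) (g (vsmult r x)) = vsmult r (vadd (f x) (g x))"
    using lmap_smult[OF f r x] lmap_smult[OF g r x] r by (simp add: smult_r_distr)
qed

lemma lmap_fun_upd: "lmap a a (\<lambda>x. x(k := \<zero>\<^bsub>C\<^esub>))"
  unfolding lmap_def by (auto simp: Cpow_iff fun_eq_iff)

lemma lmap_single_scaled_coord:
  assumes g: "lmap a b g" and s: "s \<in> carrier R" and k: "k < b'"
  shows "lmap a b' (\<lambda>z. single k (s \<odot>\<^bsub>C\<^esub> g z j))"
  unfolding lmap_def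
proof (intro conjI ballI Pi_I)
  fix x assume "x \<in> Cpow a"
  then show "single k (s \<odot>\<^bsub>C\<^esub> g x j) \<in> Cpow b'"
    using s k by (intro single_Cpow smult_closed Cpow_coord[OF lmap_closed[OF g]])
next
  fix x y assume x: "x \<in> Cpow a" and y: "y \<in> Cpow a"
  have "g x j \<in> carrier C" "g y j \<in> carrier C"
    using x y by (auto intro: Cpow_coord lmap_closed[OF g])
  then show "single k (s \<odot>\<^bsub>C\<^esub> g (vadd x y) j) = vadd (single k (s \<odot>\<^bsub>C\<^esub> g x j)) (single k (s \<odot>\<^bsub>C\<^esub> g y j))"
    using lmap_add[OF g x y] s by (auto simp: single_def smult_r_distr)
next
  fix r x assume r: "r \<in> carrier R" and x: "x \<in> Cpow a"
  have "g x j \<in> carrier C" using x by (auto intro: Cpow_coord lmap_closed[OF g])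
  then show "single k (s \<odot>\<^bsub>C\<^esub> g (vsmult r x) j) = vsmult r (single k (s \<odot>\<^bsub>C\<^esub> g x j))"
    using lmap_smult[OF g r x] s r by (auto simp: single_def smult_assoc1[symmetric] R.m_comm)
qed

lemma lmap_inj_on:
  assumes g: "lmap a b g" and ker: "\<And>x. x \<in> Cpow a \<Longrightarrow> g x = vzero \<Longrightarrow> x = vzero"
  shows "inj_on g (Cpow a)"
proof
  fix x y assume x: "x \<in> Cpow a" and y: "y \<in> Cpow a" and eq: "g x = g y"
  have "g (vadd x (vneg y)) = vadd (g x) (vneg (g y))"
    using lmap_add[OF g x vneg_Cpow[OF y]] lmap_neg[OF g y] by simp
  also have "\<dots> = vzero"
    using eq Cpow_coord[OF lmap_closed[OF g y]] by (simp add: M.r_neg)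
  finally have "vadd x (vneg y) = vzero" using ker vadd_Cpow[OF x vneg_Cpow[OF y]] by blast
  then have "x i \<oplus>\<^bsub>C\<^esub> \<ominus>\<^bsub>C\<^esub> y i = \<zero>\<^bsub>C\<^esub>" for i by metis
  then show "x = y"
    using Cpow_coord[OF x] Cpow_coord[OF y]
    by (metis M.add.inv_closed M.minus_equality M.minus_minus ext)
qed

lemma lin_map_to_Cpow_iff:
  "lin_map R C (pow_mod C b) h \<longleftrightarrow> h \<in> carrier C \<rightarrow> Cpow b \<and>
     (\<forall>x\<in>carrier C. \<forall>y\<in>carrier C. h (x \<oplus>\<^bsub>C\<^esub> y) = vadd (h x) (h y)) \<and>
     (\<forall>r\<in>carrier R. \<forall>x\<in>carrier C. h (r \<odot>\<^bsub>C\<^esub> x) = vsmult r (h x))"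
  unfolding lin_map_def pow_mod_add pow_mod_smult ..

lemma lin_map_to_Cpow_coord: "lin_map R C (pow_mod C b) h \<Longrightarrow> lin_map R C C (\<lambda>c. h c k)"
  unfolding lin_map_to_Cpow_iff unfolding lin_map_def by (auto intro: Cpow_coord)

lemma lin_map_to_Cpow_fun_upd:
  "lin_map R C (pow_mod C (Suc b)) h \<Longrightarrow> lin_map R C (pow_mod C b) (\<lambda>c. (h c)(b := \<zero>\<^bsub>C\<^esub>))"
  unfolding lin_map_to_Cpow_iff by (auto simp: fun_eq_iff intro: fun_upd_Cpow)

lemma lin_map_lmap_single:
  assumes g: "lmap a b g" and i: "i < a"
  shows "lin_map R C (pow_mod C b) (\<lambda>c. g (single i c))"
  unfolding lin_map_to_Cpow_iff
proof (intro conjI ballI Pi_I)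
  show "c \<in> carrier C \<Longrightarrow> g (single i c) \<in> Cpow b" for c
    by (rule lmap_closed[OF g single_Cpow[OF _ i]])
  show "x \<in> carrier C \<Longrightarrow> y \<in> carrier C \<Longrightarrow>
      g (single i (x \<oplus>\<^bsub>C\<^esub> y)) = vadd (g (single i x)) (g (single i y))" for x y
    by (simp add: single_add lmap_add[OF g] single_Cpow i)
  show "r \<in> carrier R \<Longrightarrow> x \<in> carrier C \<Longrightarrow> g (single i (r \<odot>\<^bsub>C\<^esub> x)) = vsmult r (g (single i x))" for r x
    by (simp add: single_smult lmap_smult[OF g] single_Cpow i)
qed

definition homothety_coeff :: "('c \<Rightarrow> 'c) \<Rightarrow> 'a" where
  "homothety_coeff \<phi> = (THE r. r \<in> carrier R \<and> (\<forall>c\<in>carrier C. \<phi> c = r \<odot>\<^bsub>C\<^esub> c))"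

lemma homothety_coeff:
  assumes "lin_map R C C \<phi>"
  shows homothety_coeff_closed: "homothety_coeff \<phi> \<in> carrier R"
    and homothety_coeff_apply: "c \<in> carrier C \<Longrightarrow> \<phi> c = homothety_coeff \<phi> \<odot>\<^bsub>C\<^esub> c"
  using theI'[OF homothety[unfolded homothety_iso_def, rule_format, OF assms]]
  unfolding homothety_coeff_def by blast+

lemma homothety_coeff_eqI:
  assumes r: "r \<in> carrier R" and \<phi>: "\<And>c. c \<in> carrier C \<Longrightarrow> \<phi> c = r \<odot>\<^bsub>C\<^esub> c"
  shows "homothety_coeff \<phi> = r"
proof -
  have "lin_map R C C \<phi>"
    unfolding lin_map_def using r
    by (auto simp: \<phi> smult_r_distr smult_assoc1[symmetric] R.m_comm)
  from homothety[unfolded homothety_iso_def, rule_format, OF this] show ?thesis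
    unfolding homothety_coeff_def using r \<phi> by (intro the1_equality) auto
qed

definition entry :: "((nat \<Rightarrow> 'c) \<Rightarrow> nat \<Rightarrow> 'c) \<Rightarrow> nat \<Rightarrow> nat \<Rightarrow> 'a" where
  "entry f i j = homothety_coeff (\<lambda>c. f (single i c) j)"

lemma entry_closed: "lmap a b f \<Longrightarrow> i < a \<Longrightarrow> entry f i j \<in> carrier R"
  unfolding entry_def by (intro homothety_coeff_closed lin_map_to_Cpow_coord lin_map_lmap_single)

lemma entry_single:
  "lmap a b f \<Longrightarrow> i < a \<Longrightarrow> c \<in> carrier C \<Longrightarrow> f (single i c) j = entry f i j \<odot>\<^bsub>C\<^esub> c"
  unfolding entry_def
  by (rule homothety_coeff_apply[OF lin_map_to_Cpow_coord[OF lin_map_lmap_single]])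

lemma entry_eqI:
  "r \<in> carrier R \<Longrightarrow> (\<And>c. c \<in> carrier C \<Longrightarrow> f (single i c) j = r \<odot>\<^bsub>C\<^esub> c) \<Longrightarrow> entry f i j = r"
  unfolding entry_def by (rule homothety_coeff_eqI)

lemma entry_cong:
  assumes "\<And>x. x \<in> Cpow a \<Longrightarrow> f x = g x" and "i < a"
  shows "entry f i j = entry g i j"
  unfolding entry_def homothety_coeff_def using assms single_Cpow by simp

lemma entry_id: "entry (\<lambda>x. x) i j = (if i = j then \<one>\<^bsub>R\<^esub> else \<zero>\<^bsub>R\<^esub>)"
  by (rule entry_eqI) (auto simp: single_def)

lemma entry_vadd:
  assumes f: "lmap a b f" and g: "lmap a b g" and i: "i < a"
  shows "entry (\<lambda>x. vadd (f x) (g x)) i j = entry f i j \<oplus>\<^bsub>R\<^esub> entry g i j"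
  by (rule entry_eqI)
    (simp_all add: entry_closed[OF f i] entry_closed[OF g i] entry_single[OF f i]
      entry_single[OF g i] smult_l_distr)

definition residually_zero :: "nat \<Rightarrow> nat \<Rightarrow> ((nat \<Rightarrow> 'c) \<Rightarrow> nat \<Rightarrow> 'c) \<Rightarrow> bool" where
  "residually_zero a b f \<longleftrightarrow> (\<forall>i<a. \<forall>j<b. entry f i j \<in> m)"

definition residually_id :: "nat \<Rightarrow> ((nat \<Rightarrow> 'c) \<Rightarrow> nat \<Rightarrow> 'c) \<Rightarrow> bool" where
  "residually_id a g \<longleftrightarrow> (\<forall>i<a. \<forall>j<a. entry g i j \<in> m \<longleftrightarrow> i \<noteq> j)"

text \<open>The formula \<open>(g \<circ> h)\<^sub>j = \<Sum>\<^sub>k g\<^sub>k\<^sub>j h\<^sub>k\<close> read modulo \<open>m\<close>, by induction on the length of \<open>h\<close>.\<close>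

lemma comp_coord_homothety_in_max:
  assumes g: "lmap b b2 g"
  shows "b' \<le> b \<Longrightarrow> lin_map R C (pow_mod C b') h \<Longrightarrow>
    (\<And>k. k < b' \<Longrightarrow> entry g k j \<otimes>\<^bsub>R\<^esub> homothety_coeff (\<lambda>c. h c k) \<in> m) \<Longrightarrow>
    \<exists>r\<in>m. \<forall>c\<in>carrier C. g (h c) j = r \<odot>\<^bsub>C\<^esub> c"
proof (induction b' arbitrary: h)
  case 0
  have "g (h c) j = \<zero>\<^bsub>R\<^esub> \<odot>\<^bsub>C\<^esub> c" if c: "c \<in> carrier C" for c
  proof -
    have "h c = vzero" using "0.prems"(2) c Cpow_0 unfolding lin_map_to_Cpow_iff by blast
    then show ?thesis using lmap_zero[OF g] c by simp
  qed
  then show ?case using max.zero_closed by blast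
next
  case (Suc b')
  let ?h' = "\<lambda>c. (h c)(b' := \<zero>\<^bsub>C\<^esub>)"
  let ?G = "homothety_coeff (\<lambda>c. h c b')"
  have h': "lin_map R C (pow_mod C b') ?h'" by (rule lin_map_to_Cpow_fun_upd[OF Suc.prems(2)])
  have "\<exists>r\<in>m. \<forall>c\<in>carrier C. g (?h' c) j = r \<odot>\<^bsub>C\<^esub> c"
  proof (rule Suc.IH[OF _ h'])
    show "b' \<le> b" using Suc.prems(1) by simp
    fix k assume "k < b'"
    then show "entry g k j \<otimes>\<^bsub>R\<^esub> homothety_coeff (\<lambda>c. ?h' c k) \<in> m"
      using Suc.prems(3)[of k] by simp
  qed
  then obtain r1 where r1: "r1 \<in> m" "\<And>c. c \<in> carrier C \<Longrightarrow> g (?h' c) j = r1 \<odot>\<^bsub>C\<^esub> c"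
    by blast
  have G: "?G \<in> carrier R" "\<And>c. c \<in> carrier C \<Longrightarrow> h c b' = ?G \<odot>\<^bsub>C\<^esub> c"
    using homothety_coeff[OF lin_map_to_Cpow_coord[OF Suc.prems(2)]] by auto
  have b': "b' < b" using Suc.prems(1) by simp
  have "g (h c) j = (r1 \<oplus>\<^bsub>R\<^esub> entry g b' j \<otimes>\<^bsub>R\<^esub> ?G) \<odot>\<^bsub>C\<^esub> c" if c: "c \<in> carrier C" for c
  proof -
    have hc: "h c \<in> Cpow (Suc b')" using Suc.prems(2) c unfolding lin_map_to_Cpow_iff by blast
    have "g (h c) j = g (vadd (?h' c) (single b' (h c b'))) j"
      using Cpow_Suc_decomp[OF hc] by simp
    also have "\<dots> = g (?h' c) j \<oplus>\<^bsub>C\<^esub> g (single b' (h c b')) j"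
    proof (rule lmap_coord_add[OF g])
      show "?h' c \<in> Cpow b" using Cpow_mono[OF fun_upd_Cpow[OF hc]] Suc.prems(1) by simp
      show "single b' (h c b') \<in> Cpow b" using single_Cpow[OF Cpow_coord[OF hc]] Suc.prems(1) by simp
    qed
    also have "\<dots> = r1 \<odot>\<^bsub>C\<^esub> c \<oplus>\<^bsub>C\<^esub> entry g b' j \<odot>\<^bsub>C\<^esub> (?G \<odot>\<^bsub>C\<^esub> c)"
      using r1(2)[OF c] entry_single[OF g b'] G c by simp
    also have "\<dots> = (r1 \<oplus>\<^bsub>R\<^esub> entry g b' j \<otimes>\<^bsub>R\<^esub> ?G) \<odot>\<^bsub>C\<^esub> c"
      using r1(1) max.a_subset entry_closed[OF g b'] G(1) c
      by (simp add: smult_l_distr smult_assoc1 subsetD)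
    finally show ?thesis .
  qed
  moreover have "r1 \<oplus>\<^bsub>R\<^esub> entry g b' j \<otimes>\<^bsub>R\<^esub> ?G \<in> m"
    using r1(1) Suc.prems(3)[of b'] by simp
  ultimately show ?case by blast
qed

lemma entry_comp_in_max:
  assumes f: "lmap a b f" and g: "lmap b b2 g" and i: "i < a"
    and prod: "\<And>k. k < b \<Longrightarrow> entry g k j \<otimes>\<^bsub>R\<^esub> entry f i k \<in> m"
  shows "entry (\<lambda>x. g (f x)) i j \<in> m"
proof -
  obtain r where r: "r \<in> m" "\<And>c. c \<in> carrier C \<Longrightarrow> g (f (single i c)) j = r \<odot>\<^bsub>C\<^esub> c"
    using comp_coord_homothety_in_max[OF g order_refl lin_map_lmap_single[OF f i]] prod
    unfolding entry_def by blast
  then have "entry (\<lambda>x. g (f x)) i j = r" using max.a_subset by (intro entry_eqI) auto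
  with r(1) show ?thesis by simp
qed

lemma residually_zero_comp_left:
  assumes f: "lmap a b f" and g: "lmap b b2 g" and "residually_zero b b2 g"
  shows "residually_zero a b2 (\<lambda>x. g (f x))"
  unfolding residually_zero_def
proof (intro allI impI)
  fix i j assume i: "i < a" and j: "j < b2"
  show "entry (\<lambda>x. g (f x)) i j \<in> m"
  proof (rule entry_comp_in_max[OF f g i])
    fix k assume "k < b"
    then have "entry g k j \<in> m" using assms(3) j unfolding residually_zero_def by blast
    then show "entry g k j \<otimes>\<^bsub>R\<^esub> entry f i k \<in> m" by (rule max.I_r_closed[OF _ entry_closed[OF f i]])
  qed
qed

lemma residually_zero_comp_right:
  assumes f: "lmap a b f" and "residually_zero a b f" and g: "lmap b b2 g"
  shows "residually_zero a b2 (\<lambda>x. g (f x))"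
  unfolding residually_zero_def
proof (intro allI impI)
  fix i j assume i: "i < a" and j: "j < b2"
  show "entry (\<lambda>x. g (f x)) i j \<in> m"
  proof (rule entry_comp_in_max[OF f g i])
    fix k assume k: "k < b"
    then have "entry f i k \<in> m" using assms(2) i unfolding residually_zero_def by blast
    then show "entry g k j \<otimes>\<^bsub>R\<^esub> entry f i k \<in> m" by (rule max.I_l_closed[OF _ entry_closed[OF g k]])
  qed
qed

lemma Units_neg_inv:
  assumes "u \<in> Units R"
  shows "\<ominus>\<^bsub>R\<^esub> (inv\<^bsub>R\<^esub> u) \<in> carrier R" and "u \<otimes>\<^bsub>R\<^esub> (\<ominus>\<^bsub>R\<^esub> (inv\<^bsub>R\<^esub> u)) = \<ominus>\<^bsub>R\<^esub> \<one>\<^bsub>R\<^esub>"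
    and "(\<ominus>\<^bsub>R\<^esub> (inv\<^bsub>R\<^esub> u)) \<otimes>\<^bsub>R\<^esub> u = \<ominus>\<^bsub>R\<^esub> \<one>\<^bsub>R\<^esub>"
  using assms by (simp_all add: R.r_minus R.l_minus R.Units_closed R.Units_inv_closed)

lemma smult_cancel_Units:
  assumes "u \<in> Units R" and "c \<in> carrier C" and "u \<odot>\<^bsub>C\<^esub> c = \<zero>\<^bsub>C\<^esub>"
  shows "c = \<zero>\<^bsub>C\<^esub>"
proof -
  have "c = (inv\<^bsub>R\<^esub> u \<otimes>\<^bsub>R\<^esub> u) \<odot>\<^bsub>C\<^esub> c" using assms by simp
  also have "\<dots> = inv\<^bsub>R\<^esub> u \<odot>\<^bsub>C\<^esub> (u \<odot>\<^bsub>C\<^esub> c)"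
    using assms by (intro smult_assoc1) (simp_all add: R.Units_closed R.Units_inv_closed)
  also have "\<dots> = \<zero>\<^bsub>C\<^esub>" using assms(3) R.Units_inv_closed[OF assms(1)] by simp
  finally show ?thesis .
qed

section \<open>Elementary base changes\<close>

lemma swap_coords_Cpow: "k < a \<Longrightarrow> l < a \<Longrightarrow> x \<in> Cpow a \<Longrightarrow> swap_coords k l x \<in> Cpow a"
  unfolding Cpow_iff swap_coords_def by auto

lemma lmap_swap_coords: "k < a \<Longrightarrow> l < a \<Longrightarrow> lmap a a (swap_coords k l)"
  unfolding lmap_def by (auto simp: swap_coords_Cpow) (simp_all add: swap_coords_def)

lemma swap_coords_single: "swap_coords k l (single l c) = single k c"
  unfolding swap_coords_def single_def by auto

text \<open>Let \<open>u = entry D A B\<close> be a unit and \<open>s = - u\<inverse>\<close>. After the base change \<open>clear_row A B D s\<close>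
  of its source, the \<open>B\<close>-th coordinate of \<open>D\<close> only depends on the \<open>A\<close>-th one; after the base
  change \<open>clear_col A B D s\<close> of its target, \<open>D\<close> maps the \<open>A\<close>-th summand into the \<open>B\<close>-th one.\<close>

definition clear_row :: "nat \<Rightarrow> nat \<Rightarrow> ((nat \<Rightarrow> 'c) \<Rightarrow> nat \<Rightarrow> 'c) \<Rightarrow> 'a \<Rightarrow> (nat \<Rightarrow> 'c) \<Rightarrow> nat \<Rightarrow> 'c" where
  "clear_row A B D s x = vadd x (single A (s \<odot>\<^bsub>C\<^esub> D (x(A := \<zero>\<^bsub>C\<^esub>)) B))"

definition clear_col :: "nat \<Rightarrow> nat \<Rightarrow> ((nat \<Rightarrow> 'c) \<Rightarrow> nat \<Rightarrow> 'c) \<Rightarrow> 'a \<Rightarrow> (nat \<Rightarrow> 'c) \<Rightarrow> nat \<Rightarrow> 'c" where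
  "clear_col A B D s y = vadd y ((D (single A (s \<odot>\<^bsub>C\<^esub> y B)))(B := \<zero>\<^bsub>C\<^esub>))"

lemma lmap_clear_row:
  assumes D: "lmap (Suc A) b D" and s: "s \<in> carrier R"
  shows "lmap (Suc A) (Suc A) (clear_row A B D s)"
  unfolding clear_row_def
  by (rule lmap_vadd[OF lmap_id lmap_single_scaled_coord[OF lmap_comp[OF lmap_fun_upd D] s]]) simp_all

lemma lmap_clear_col:
  assumes D: "lmap (Suc A) (Suc B) D" and s: "s \<in> carrier R"
  shows "lmap (Suc B) (Suc B) (clear_col A B D s)"
proof -
  have "lmap (Suc B) (Suc A) (\<lambda>y. single A (s \<odot>\<^bsub>C\<^esub> y B))"
    using lmap_single_scaled_coord[OF lmap_id[of "Suc B" "Suc B"] s, of A "Suc A" B] by simp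
  then show ?thesis
    unfolding clear_col_def
    by (intro lmap_vadd lmap_id lmap_comp[OF _ lmap_fun_upd] lmap_comp[OF _ D]) simp_all
qed

lemma clear_row_inverse:
  assumes D: "lmap (Suc A) b D" and s: "s \<in> carrier R" "s' \<in> carrier R"
    and ss: "s' \<oplus>\<^bsub>R\<^esub> s = \<zero>\<^bsub>R\<^esub>" and x: "x \<in> Cpow (Suc A)"
  shows "clear_row A B D s' (clear_row A B D s x) = x"
proof
  fix i
  define r where "r = D (x(A := \<zero>\<^bsub>C\<^esub>)) B"
  have r: "r \<in> carrier C"
    unfolding r_def
    by (rule Cpow_coord[OF lmap_closed[OF D]]) (use Cpow_mono[OF fun_upd_Cpow[OF x]] in simp)
  have xi: "x i \<in> carrier C" by (rule Cpow_coord[OF x])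
  have "(clear_row A B D s x)(A := \<zero>\<^bsub>C\<^esub>) = x(A := \<zero>\<^bsub>C\<^esub>)"
    unfolding clear_row_def single_def using Cpow_coord[OF x] by (auto simp: fun_eq_iff)
  then have "clear_row A B D s' (clear_row A B D s x) i
      = (x i \<oplus>\<^bsub>C\<^esub> single A (s \<odot>\<^bsub>C\<^esub> r) i) \<oplus>\<^bsub>C\<^esub> single A (s' \<odot>\<^bsub>C\<^esub> r) i"
    unfolding clear_row_def[of A B D s'] r_def by (simp add: clear_row_def)
  also have "\<dots> = x i"
  proof (cases "i = A")
    case True
    have "(x i \<oplus>\<^bsub>C\<^esub> s \<odot>\<^bsub>C\<^esub> r) \<oplus>\<^bsub>C\<^esub> s' \<odot>\<^bsub>C\<^esub> r = x i \<oplus>\<^bsub>C\<^esub> (s' \<oplus>\<^bsub>R\<^esub> s) \<odot>\<^bsub>C\<^esub> r"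
      using xi r s by (simp add: smult_l_distr M.a_ac)
    then show ?thesis using True ss xi r by (simp add: single_def)
  next
    case False
    then show ?thesis using xi by (simp add: single_def)
  qed
  finally show "clear_row A B D s' (clear_row A B D s x) i = x i" .
qed

lemma clear_row_single:
  assumes D: "lmap (Suc A) b D" and s: "s \<in> carrier R" and c: "c \<in> carrier C"
  shows "clear_row A B D s (single A c) = single A c"
proof -
  have "(single A c)(A := \<zero>\<^bsub>C\<^esub>) = vzero" by (auto simp: single_def)
  then show ?thesis
    unfolding clear_row_def using lmap_zero[OF D] s c by (simp add: single_def)
qed

lemma last_clear_row:
  assumes D: "lmap (Suc A) b D" and u: "entry D A B = u"
    and s: "s \<in> carrier R" and us: "u \<otimes>\<^bsub>R\<^esub> s = \<ominus>\<^bsub>R\<^esub> \<one>\<^bsub>R\<^esub>" and x: "x \<in> Cpow (Suc A)"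
  shows "D (clear_row A B D s x) B = u \<odot>\<^bsub>C\<^esub> x A"
proof -
  have x': "x(A := \<zero>\<^bsub>C\<^esub>) \<in> Cpow (Suc A)" using Cpow_mono[OF fun_upd_Cpow[OF x]] by simp
  define r where "r = D (x(A := \<zero>\<^bsub>C\<^esub>)) B"
  have r: "r \<in> carrier C" unfolding r_def by (rule Cpow_coord[OF lmap_closed[OF D x']])
  have xA: "x A \<in> carrier C" by (rule Cpow_coord[OF x])
  have sr: "s \<odot>\<^bsub>C\<^esub> r \<in> carrier C" using s r by simp
  have uR: "u \<in> carrier R" using entry_closed[OF D] u by auto
  have "D (clear_row A B D s x) B = D x B \<oplus>\<^bsub>C\<^esub> D (single A (s \<odot>\<^bsub>C\<^esub> r)) B"
    unfolding clear_row_def r_def[symmetric] by (rule lmap_coord_add[OF D x single_Cpow[OF sr]]) simp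
  also have "D x B = r \<oplus>\<^bsub>C\<^esub> u \<odot>\<^bsub>C\<^esub> x A"
    using lmap_coord_add[OF D x' single_Cpow[OF xA], of A B] Cpow_Suc_decomp[OF x]
      entry_single[OF D _ xA, of A B] u unfolding r_def by simp
  also have "D (single A (s \<odot>\<^bsub>C\<^esub> r)) B = \<ominus>\<^bsub>C\<^esub> r"
    using entry_single[OF D _ sr, of A B] u smult_assoc1[OF uR s r] us r by (simp add: smult_l_minus)
  also have "(r \<oplus>\<^bsub>C\<^esub> u \<odot>\<^bsub>C\<^esub> x A) \<oplus>\<^bsub>C\<^esub> \<ominus>\<^bsub>C\<^esub> r = u \<odot>\<^bsub>C\<^esub> x A"
    using r uR xA by (simp add: M.a_ac M.r_neg2)
  finally show ?thesis .
qed

lemma clear_col_last: "y \<in> Cpow (Suc B) \<Longrightarrow> clear_col A B D s y B = y B"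
  unfolding clear_col_def using Cpow_coord by simp

lemma clear_col_inverse:
  assumes D: "lmap (Suc A) b D" and s: "s \<in> carrier R" "s' \<in> carrier R"
    and ss: "s' \<oplus>\<^bsub>R\<^esub> s = \<zero>\<^bsub>R\<^esub>" and y: "y \<in> Cpow (Suc B)"
  shows "clear_col A B D s' (clear_col A B D s y) = y"
proof
  fix i
  have yB: "y B \<in> carrier C" and yi: "y i \<in> carrier C" by (rule Cpow_coord[OF y])+
  have c: "s \<odot>\<^bsub>C\<^esub> y B \<in> carrier C" "s' \<odot>\<^bsub>C\<^esub> y B \<in> carrier C" using s yB by auto
  note sing = single_Cpow[OF c(1), of A "Suc A"] single_Cpow[OF c(2), of A "Suc A"]
  have D_coord: "D (single A (s \<odot>\<^bsub>C\<^esub> y B)) i \<in> carrier C" "D (single A (s' \<odot>\<^bsub>C\<^esub> y B)) i \<in> carrier C"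
    using sing by (auto intro: Cpow_coord lmap_closed[OF D])
  have "vadd (single A (s \<odot>\<^bsub>C\<^esub> y B)) (single A (s' \<odot>\<^bsub>C\<^esub> y B)) = single A ((s' \<oplus>\<^bsub>R\<^esub> s) \<odot>\<^bsub>C\<^esub> y B)"
    using c s yB by (simp add: single_add[symmetric] smult_l_distr M.a_comm)
  also have "\<dots> = vzero" using ss yB by (simp add: single_def)
  finally have "D (single A (s \<odot>\<^bsub>C\<^esub> y B)) i \<oplus>\<^bsub>C\<^esub> D (single A (s' \<odot>\<^bsub>C\<^esub> y B)) i = \<zero>\<^bsub>C\<^esub>"
    using lmap_coord_add[OF D sing, of i] lmap_zero[OF D] by simp
  then show "clear_col A B D s' (clear_col A B D s y) i = y i"
    unfolding clear_col_def[of A B D s'] clear_col_last[OF y]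
    using yi D_coord by (cases "i = B") (simp_all add: clear_col_def M.a_assoc)
qed

lemma clear_col_single:
  assumes D: "lmap (Suc A) (Suc B) D" and u: "entry D A B = u"
    and s: "s \<in> carrier R" and su: "s \<otimes>\<^bsub>R\<^esub> u = \<ominus>\<^bsub>R\<^esub> \<one>\<^bsub>R\<^esub>" and c: "c \<in> carrier C"
  shows "clear_col A B D s (D (single A c)) = single B (u \<odot>\<^bsub>C\<^esub> c)"
proof
  fix i
  let ?v = "D (single A c)"
  have v: "?v \<in> Cpow (Suc B)" by (rule lmap_closed[OF D single_Cpow[OF c]]) simp
  have uR: "u \<in> carrier R" using entry_closed[OF D] u by auto
  have vB: "?v B = u \<odot>\<^bsub>C\<^esub> c" using entry_single[OF D _ c, of A B] u by simp
  have "s \<odot>\<^bsub>C\<^esub> (u \<odot>\<^bsub>C\<^esub> c) = \<ominus>\<^bsub>C\<^esub> c"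
    using smult_assoc1[OF s uR c, symmetric] su c by (simp add: smult_l_minus)
  moreover have "single A (\<ominus>\<^bsub>C\<^esub> c) = vneg (single A c)"
  proof -
    have neg_zero: "\<ominus>\<^bsub>C\<^esub> \<zero>\<^bsub>C\<^esub> = \<zero>\<^bsub>C\<^esub>" by (rule M.minus_equality) simp_all
    show ?thesis by (intro ext) (simp add: single_def neg_zero)
  qed
  ultimately have "D (single A (s \<odot>\<^bsub>C\<^esub> ?v B)) = vneg ?v"
    using vB lmap_neg[OF D single_Cpow[OF c]] by simp
  then have "clear_col A B D s ?v i = ?v i \<oplus>\<^bsub>C\<^esub> ((vneg ?v)(B := \<zero>\<^bsub>C\<^esub>)) i"
    unfolding clear_col_def by simp
  then show "clear_col A B D s ?v i = single B (u \<odot>\<^bsub>C\<^esub> c) i"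
    using Cpow_coord[OF v, of i] vB by (cases "i = B") (simp_all add: single_def M.r_neg)
qed

section \<open>Minimality of residually zero complexes\<close>

lemma max_add_iff: "x \<in> m \<Longrightarrow> y \<in> carrier R \<Longrightarrow> y \<oplus>\<^bsub>R\<^esub> x \<in> m \<longleftrightarrow> y \<in> m"
proof
  assume x: "x \<in> m" and y: "y \<in> carrier R" and "y \<oplus>\<^bsub>R\<^esub> x \<in> m"
  then have "(y \<oplus>\<^bsub>R\<^esub> x) \<oplus>\<^bsub>R\<^esub> \<ominus>\<^bsub>R\<^esub> x \<in> m" by simp
  moreover have "(y \<oplus>\<^bsub>R\<^esub> x) \<oplus>\<^bsub>R\<^esub> \<ominus>\<^bsub>R\<^esub> x = y"
    using x y max.a_subset by (auto simp: R.a_assoc R.r_neg)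
  ultimately show "y \<in> m" by simp
qed simp

lemma bij_betw_clear_row:
  assumes D: "lmap (Suc A) b D" and s: "s \<in> carrier R"
  shows "bij_betw (clear_row A B D s) (Cpow (Suc A)) (Cpow (Suc A))"
proof (rule bij_betw_byWitness[where f' = "clear_row A B D (\<ominus>\<^bsub>R\<^esub> s)"])
  show "\<forall>x\<in>Cpow (Suc A). clear_row A B D (\<ominus>\<^bsub>R\<^esub> s) (clear_row A B D s x) = x"
    using s by (auto intro: clear_row_inverse[OF D] simp: R.l_neg)
  show "\<forall>x\<in>Cpow (Suc A). clear_row A B D s (clear_row A B D (\<ominus>\<^bsub>R\<^esub> s) x) = x"
    using s by (auto intro: clear_row_inverse[OF D] simp: R.r_neg)
  show "clear_row A B D s ` Cpow (Suc A) \<subseteq> Cpow (Suc A)"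
    "clear_row A B D (\<ominus>\<^bsub>R\<^esub> s) ` Cpow (Suc A) \<subseteq> Cpow (Suc A)"
    using lmap_closed[OF lmap_clear_row[OF D]] s by auto
qed

lemma bij_betw_block_triangular:
  assumes h: "lmap (Suc a) (Suc a) h" and u: "u \<in> Units R"
    and last: "\<And>x. x \<in> Cpow (Suc a) \<Longrightarrow> h x a = u \<odot>\<^bsub>C\<^esub> x a"
    and bij: "bij_betw h (Cpow a) (Cpow a)"
  shows "bij_betw h (Cpow (Suc a)) (Cpow (Suc a))"
  unfolding bij_betw_def
proof
  show "inj_on h (Cpow (Suc a))"
  proof (rule lmap_inj_on[OF h])
    fix x assume x: "x \<in> Cpow (Suc a)" and hx: "h x = vzero"
    have "x a = \<zero>\<^bsub>C\<^esub>" using smult_cancel_Units[OF u Cpow_coord[OF x]] last[OF x] hx by simp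
    then have xa: "x \<in> Cpow a" by (rule Cpow_SucD[OF x])
    have "h x = h vzero" using hx lmap_zero[OF h] by simp
    then show "x = vzero" by (rule inj_onD[OF bij_betw_imp_inj_on[OF bij] _ xa vzero_Cpow])
  qed
  have surj: "y \<in> h ` Cpow (Suc a)" if y: "y \<in> Cpow (Suc a)" for y
  proof -
    have uR: "u \<in> carrier R" "inv\<^bsub>R\<^esub> u \<in> carrier R" using u by auto
    define w where "w = single a (inv\<^bsub>R\<^esub> u \<odot>\<^bsub>C\<^esub> y a)"
    have w: "w \<in> Cpow (Suc a)" unfolding w_def using uR Cpow_coord[OF y] by (intro single_Cpow) auto
    have hw: "h w \<in> Cpow (Suc a)" by (rule lmap_closed[OF h w])
    have "h w a = y a"
      using last[OF w] u Cpow_coord[OF y] unfolding w_def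
      by (simp add: single_def smult_assoc1[symmetric] uR)
    then have "vadd y (vneg (h w)) a = \<zero>\<^bsub>C\<^esub>" using Cpow_coord[OF y] by (simp add: M.r_neg)
    then have "vadd y (vneg (h w)) \<in> Cpow a" by (rule Cpow_SucD[OF vadd_Cpow[OF y vneg_Cpow[OF hw]]])
    then have "vadd y (vneg (h w)) \<in> h ` Cpow a" using bij unfolding bij_betw_def by simp
    then obtain z where z: "vadd y (vneg (h w)) = h z" "z \<in> Cpow a" by (rule imageE)
    have zS: "z \<in> Cpow (Suc a)" using Cpow_mono[OF z(2)] by simp
    have "h (vadd z w) = vadd (vadd y (vneg (h w))) (h w)"
      using lmap_add[OF h zS w] z(1)[symmetric] by simp
    also have "\<dots> = y"
      using Cpow_coord[OF y] Cpow_coord[OF hw] by (simp add: M.a_assoc M.l_neg)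
    finally have "y = h (vadd z w)" by (rule sym)
    then show ?thesis using vadd_Cpow[OF zS w] by (rule image_eqI)
  qed
  show "h ` Cpow (Suc a) = Cpow (Suc a)"
  proof
    show "h ` Cpow (Suc a) \<subseteq> Cpow (Suc a)" by (rule image_subsetI) (rule lmap_closed[OF h])
    show "Cpow (Suc a) \<subseteq> h ` Cpow (Suc a)" by (rule subsetI) (rule surj)
  qed
qed

lemma residually_id_clear_row:
  assumes g: "lmap (Suc a) (Suc a) g" and res: "residually_id (Suc a) g"
    and s: "s \<in> carrier R"
  shows "residually_id a (\<lambda>x. g (clear_row a a g s x))"
  unfolding residually_id_def
proof (intro allI impI)
  fix i j assume i: "i < a" and j: "j < a"
  let ?e = "entry g"
  have e: "?e i j \<in> carrier R" "?e a j \<in> carrier R" "?e i a \<in> carrier R"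
    using entry_closed[OF g] i by auto
  have "entry (\<lambda>x. g (clear_row a a g s x)) i j = ?e i j \<oplus>\<^bsub>R\<^esub> ?e a j \<otimes>\<^bsub>R\<^esub> (s \<otimes>\<^bsub>R\<^esub> ?e i a)"
  proof (rule entry_eqI)
    show "?e i j \<oplus>\<^bsub>R\<^esub> ?e a j \<otimes>\<^bsub>R\<^esub> (s \<otimes>\<^bsub>R\<^esub> ?e i a) \<in> carrier R" using e s by simp
    fix c assume c: "c \<in> carrier C"
    have ic: "single i c \<in> Cpow (Suc a)" using single_Cpow[OF c] i by simp
    have "(single i c)(a := \<zero>\<^bsub>C\<^esub>) = single i c" using i by (auto simp: single_def)
    then have "clear_row a a g s (single i c) = vadd (single i c) (single a (s \<odot>\<^bsub>C\<^esub> (?e i a \<odot>\<^bsub>C\<^esub> c)))"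
      unfolding clear_row_def using entry_single[OF g _ c] i by simp
    moreover have "s \<odot>\<^bsub>C\<^esub> (?e i a \<odot>\<^bsub>C\<^esub> c) \<in> carrier C" using s e c by simp
    ultimately have "g (clear_row a a g s (single i c)) j
        = ?e i j \<odot>\<^bsub>C\<^esub> c \<oplus>\<^bsub>C\<^esub> ?e a j \<odot>\<^bsub>C\<^esub> (s \<odot>\<^bsub>C\<^esub> (?e i a \<odot>\<^bsub>C\<^esub> c))"
      using lmap_coord_add[OF g ic single_Cpow] entry_single[OF g] i c by simp
    also have "\<dots> = (?e i j \<oplus>\<^bsub>R\<^esub> ?e a j \<otimes>\<^bsub>R\<^esub> (s \<otimes>\<^bsub>R\<^esub> ?e i a)) \<odot>\<^bsub>C\<^esub> c"
      using e s c by (simp add: smult_l_distr smult_assoc1)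
    finally show "g (clear_row a a g s (single i c)) j = \<dots>" .
  qed
  moreover have "?e a j \<otimes>\<^bsub>R\<^esub> (s \<otimes>\<^bsub>R\<^esub> ?e i a) \<in> m"
    using res j e s unfolding residually_id_def by (intro max.I_r_closed) auto
  ultimately show "entry (\<lambda>x. g (clear_row a a g s x)) i j \<in> m \<longleftrightarrow> i \<noteq> j"
    using max_add_iff e res i j unfolding residually_id_def by simp
qed

text \<open>Gaussian elimination: for the unit pivot \<open>u = entry g a a\<close>, the map \<open>g \<circ> clear_row a a g (- u\<inverse>)\<close>
  is block triangular, and its upper block is again residually the identity.\<close>

lemma residually_id_bij:
  "lmap a a g \<Longrightarrow> residually_id a g \<Longrightarrow> bij_betw g (Cpow a) (Cpow a)"
proof (induction a arbitrary: g)
  case 0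
  then show ?case using lmap_zero unfolding Cpow_0 bij_betw_def by simp
next
  case (Suc a)
  note g = Suc.prems(1)
  let ?u = "entry g a a"
  have "?u \<notin> m" using Suc.prems(2)[unfolded residually_id_def, rule_format, of a a] by simp
  then have u: "?u \<in> Units R" by (rule nonmember_Units[OF entry_closed[OF g lessI]])
  define s where "s = \<ominus>\<^bsub>R\<^esub> (inv\<^bsub>R\<^esub> ?u)"
  have s: "s \<in> carrier R" "?u \<otimes>\<^bsub>R\<^esub> s = \<ominus>\<^bsub>R\<^esub> \<one>\<^bsub>R\<^esub>" unfolding s_def using Units_neg_inv[OF u] by auto
  define h where "h x = g (clear_row a a g s x)" for x
  have h: "lmap (Suc a) (Suc a) h"
    unfolding h_def by (rule lmap_comp[OF lmap_clear_row[OF g s(1)] g])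
  have last: "h x a = ?u \<odot>\<^bsub>C\<^esub> x a" if "x \<in> Cpow (Suc a)" for x
    unfolding h_def by (rule last_clear_row[OF g refl s that])
  have "lmap a a h"
  proof (rule lmap_codom[OF lmap_restrict[OF h]])
    fix x assume x: "x \<in> Cpow a"
    then have "h x a = \<zero>\<^bsub>C\<^esub>" using last[OF Cpow_mono[OF x]] u by (simp add: Cpow_iff R.Units_closed)
    then show "h x \<in> Cpow a" using Cpow_SucD lmap_closed[OF h Cpow_mono[OF x]] by simp
  qed simp
  moreover have "residually_id a h"
    unfolding h_def by (rule residually_id_clear_row[OF Suc.prems s(1)])
  ultimately have "bij_betw h (Cpow (Suc a)) (Cpow (Suc a))"
    by (intro bij_betw_block_triangular[OF h u last] Suc.IH)
  then have "bij_betw (h \<circ> clear_row a a g (inv\<^bsub>R\<^esub> ?u)) (Cpow (Suc a)) (Cpow (Suc a))"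
    by (intro bij_betw_trans[OF bij_betw_clear_row[OF g]]) (simp add: u)
  moreover have "(h \<circ> clear_row a a g (inv\<^bsub>R\<^esub> ?u)) x = g x" if "x \<in> Cpow (Suc a)" for x
    unfolding h_def s_def comp_def using u
    by (subst clear_row_inverse[OF g _ _ _ that]) (simp_all add: R.l_neg)
  ultimately show ?case using bij_betw_cong by blast
qed

lemma lmap_vzero: "lmap a b (\<lambda>x. vzero)"
  unfolding lmap_def by (simp add: vzero_Cpow)

lemma entry_vzero: "entry (\<lambda>x. vzero) i j = \<zero>\<^bsub>R\<^esub>"
  by (rule entry_eqI) simp_all

text \<open>Here \<open>\<phi>\<^sub>n = 1 + d s + s d\<close>, and \<open>d s + s d\<close> is residually zero.\<close>

lemma homotopic_id_residually_id:
  assumes d: "\<And>n. 1 \<le> n \<Longrightarrow> lmap (a n) (a (n - 1)) (d n)"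
    and d_res: "\<And>n. 1 \<le> n \<Longrightarrow> residually_zero (a n) (a (n - 1)) (d n)"
    and hom: "cx_homotopic R C a d \<phi> (\<lambda>n x. x)"
  shows "residually_id (a n) (\<phi> n)"
proof -
  obtain s where s_lin: "\<And>n. lin_map R (pow_mod C (a n)) (pow_mod C (a (Suc n))) (s n)"
    and s_eq: "\<And>n x. x \<in> Cpow (a n) \<Longrightarrow> \<phi> n x = x \<oplus>\<^bsub>pow_mod C (a n)\<^esub> d (Suc n) (s n x)
      \<oplus>\<^bsub>pow_mod C (a n)\<^esub> (if n = 0 then \<zero>\<^bsub>pow_mod C (a n)\<^esub> else s (n - 1) (d n x))"
    using hom unfolding cx_homotopic_def by blast
  have s: "lmap (a n) (a (Suc n)) (s n)" for n using s_lin unfolding lin_map_pow_mod_iff .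
  define ds where "ds x = d (Suc n) (s n x)" for x
  define t where "t x = (if n = 0 then vzero else s (n - 1) (d n x))" for x
  have \<phi>: "\<phi> n x = vadd (vadd x (ds x)) (t x)" if "x \<in> Cpow (a n)" for x
    using s_eq[OF that] unfolding ds_def t_def by (simp add: pow_mod_add pow_mod_zero)
  have ds: "lmap (a n) (a n) ds" "residually_zero (a n) (a n) ds"
    unfolding ds_def using residually_zero_comp_left[OF s d[of "Suc n"] d_res[of "Suc n"]]
    by (auto intro: lmap_comp[OF s d[of "Suc n"], simplified])
  have t: "lmap (a n) (a n) t \<and> residually_zero (a n) (a n) t"
  proof (cases "n = 0")
    case True
    then show ?thesis unfolding t_def residually_zero_def by (simp add: lmap_vzero entry_vzero)
  next
    case False
    then have "lmap (a (n - 1)) (a n) (s (n - 1))" using s[of "n - 1"] by simp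
    then show ?thesis
      unfolding t_def using False lmap_comp[OF d] residually_zero_comp_right[OF d d_res] by simp
  qed
  show ?thesis
    unfolding residually_id_def
  proof (intro allI impI)
    fix i j assume i: "i < a n" and j: "j < a n"
    have id_ds: "lmap (a n) (a n) (\<lambda>x. vadd x (ds x))" by (rule lmap_vadd[OF lmap_id ds(1)]) simp
    have "entry (\<phi> n) i j = entry (\<lambda>x. vadd (vadd x (ds x)) (t x)) i j"
      using \<phi> i by (rule entry_cong)
    also have "\<dots> = (entry (\<lambda>x. x) i j \<oplus>\<^bsub>R\<^esub> entry ds i j) \<oplus>\<^bsub>R\<^esub> entry t i j"
      using entry_vadd[OF id_ds conjunct1[OF t] i] entry_vadd[OF lmap_id ds(1) i] by simp
    finally show "entry (\<phi> n) i j \<in> m \<longleftrightarrow> i \<noteq> j"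
      using ds t i j entry_closed[OF ds(1) i] one_notin_max unfolding residually_zero_def
      by (simp add: max_add_iff entry_id)
  qed
qed

theorem minimal_cx_if_residually_zero:
  assumes d: "\<And>n. 1 \<le> n \<Longrightarrow> lmap (a n) (a (n - 1)) (d n)"
    and d_res: "\<And>n. 1 \<le> n \<Longrightarrow> residually_zero (a n) (a (n - 1)) (d n)"
  shows "minimal_cx R C a d"
  unfolding minimal_cx_def
proof (intro allI impI)
  fix \<phi> n assume "homotopy_equiv R C a d \<phi>"
  then obtain \<psi> where \<phi>: "chain_endo R C a d \<phi>" and \<psi>: "chain_endo R C a d \<psi>"
    and \<psi>\<phi>: "cx_homotopic R C a d (\<lambda>n. \<psi> n \<circ> \<phi> n) (\<lambda>n x. x)"
    and \<phi>\<psi>: "cx_homotopic R C a d (\<lambda>n. \<phi> n \<circ> \<psi> n) (\<lambda>n x. x)"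
    unfolding homotopy_equiv_def by blast
  have lm: "lmap (a n) (a n) (\<phi> n)" "lmap (a n) (a n) (\<psi> n)"
    using \<phi> \<psi> unfolding chain_endo_def lin_map_pow_mod_iff by blast+
  have "residually_id (a n) (\<psi> n \<circ> \<phi> n)"
    by (rule homotopic_id_residually_id[OF _ _ \<psi>\<phi>]) (use d d_res in auto)
  then have \<psi>\<phi>_bij: "bij_betw (\<psi> n \<circ> \<phi> n) (Cpow (a n)) (Cpow (a n))"
    unfolding comp_def by (rule residually_id_bij[OF lmap_comp[OF lm]])
  have "residually_id (a n) (\<phi> n \<circ> \<psi> n)"
    by (rule homotopic_id_residually_id[OF _ _ \<phi>\<psi>]) (use d d_res in auto)
  then have \<phi>\<psi>_bij: "bij_betw (\<phi> n \<circ> \<psi> n) (Cpow (a n)) (Cpow (a n))"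
    unfolding comp_def by (rule residually_id_bij[OF lmap_comp[OF lm(2,1)]])
  show "bij_betw (\<phi> n) (Cpow (a n)) (Cpow (a n))"
  proof (rule bij_betw_if_comp_bij[OF _ _ \<psi>\<phi>_bij \<phi>\<psi>_bij])
    show "\<phi> n ` Cpow (a n) \<subseteq> Cpow (a n)" by (rule image_subsetI, rule lmap_closed[OF lm(1)])
    show "\<psi> n ` Cpow (a n) \<subseteq> Cpow (a n)" by (rule image_subsetI, rule lmap_closed[OF lm(2)])
  qed
qed

section \<open>Splitting off unit entries of resolutions\<close>

lemma pow_resolution_iff:
  "pow_resolution R C N a d e \<longleftrightarrow>
     (\<forall>n\<ge>1. lmap (a n) (a (n - 1)) (d n)) \<and>
     (\<forall>n\<ge>1. {x \<in> Cpow (a n). d n x = vzero} = d (Suc n) ` Cpow (a (Suc n))) \<and>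
     lin_map R (pow_mod C (a 0)) N e \<and> e ` Cpow (a 0) = carrier N \<and>
     {x \<in> Cpow (a 0). e x = \<zero>\<^bsub>N\<^esub>} = d 1 ` Cpow (a 1)"
  unfolding pow_resolution_def lin_map_pow_mod_iff pow_mod_zero ..

lemma pow_resolutionD:
  assumes "pow_resolution R C N a d e"
  shows pow_resolution_lmap: "1 \<le> n \<Longrightarrow> lmap (a n) (a (n - 1)) (d n)"
    and pow_resolution_exact: "1 \<le> n \<Longrightarrow> {x \<in> Cpow (a n). d n x = vzero} = d (Suc n) ` Cpow (a (Suc n))"
    and pow_resolution_lin_map: "lin_map R (pow_mod C (a 0)) N e"
    and pow_resolution_surj: "e ` Cpow (a 0) = carrier N"
    and pow_resolution_ker: "{x \<in> Cpow (a 0). e x = \<zero>\<^bsub>N\<^esub>} = d 1 ` Cpow (a 1)"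
  using assms unfolding pow_resolution_iff by blast+

lemma resolution_d_d:
  assumes "pow_resolution R C N a d e" and "1 \<le> n" and "z \<in> Cpow (a (Suc n))"
  shows "d n (d (Suc n) z) = vzero"
  using pow_resolution_exact[OF assms(1,2)] imageI[OF assms(3), of "d (Suc n)"] by blast

lemma resolution_e_d:
  assumes "pow_resolution R C N a d e" and "z \<in> Cpow (a 1)"
  shows "e (d 1 z) = \<zero>\<^bsub>N\<^esub>"
  using pow_resolution_ker[OF assms(1)] imageI[OF assms(2), of "d 1"] by blast

lemma lin_map_comp_lmap:
  assumes e: "lin_map R (pow_mod C b) N e" and f: "lmap a b f"
  shows "lin_map R (pow_mod C a) N (\<lambda>x. e (f x))"
  using e lmap_closed[OF f] lmap_add[OF f] lmap_smult[OF f] vadd_Cpow vsmult_Cpow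
  unfolding lin_map_def pow_mod_add pow_mod_smult Pi_iff by simp

lemma lin_map_pow_mod_restrict:
  assumes "lin_map R (pow_mod C b) N e" and "a \<le> b"
  shows "lin_map R (pow_mod C a) N e"
  using lin_map_comp_lmap[OF assms(1) lmap_id[OF assms(2)]] by simp

definition iso_family ::
  "(nat \<Rightarrow> nat) \<Rightarrow> (nat \<Rightarrow> (nat \<Rightarrow> 'c) \<Rightarrow> nat \<Rightarrow> 'c) \<Rightarrow> (nat \<Rightarrow> (nat \<Rightarrow> 'c) \<Rightarrow> nat \<Rightarrow> 'c) \<Rightarrow> bool"
where
  "iso_family a \<alpha> \<beta> \<longleftrightarrow> (\<forall>n. lmap (a n) (a n) (\<alpha> n) \<and> lmap (a n) (a n) (\<beta> n) \<and>
     (\<forall>x\<in>Cpow (a n). \<beta> n (\<alpha> n x) = x \<and> \<alpha> n (\<beta> n x) = x))"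

lemma iso_family_id: "iso_family a (\<lambda>n x. x) (\<lambda>n x. x)"
  unfolding iso_family_def by (simp add: lmap_id)

lemma iso_family_update:
  assumes "iso_family a \<alpha> \<beta>" and "lmap (a n) (a n) f" and "lmap (a n) (a n) g"
    and "\<And>x. x \<in> Cpow (a n) \<Longrightarrow> g (f x) = x" and "\<And>x. x \<in> Cpow (a n) \<Longrightarrow> f (g x) = x"
  shows "iso_family a (\<alpha>(n := f)) (\<beta>(n := g))"
  using assms unfolding iso_family_def by simp

lemma iso_familyD:
  assumes "iso_family a \<alpha> \<beta>"
  shows "lmap (a n) (a n) (\<alpha> n)" and "lmap (a n) (a n) (\<beta> n)"
    and "x \<in> Cpow (a n) \<Longrightarrow> \<beta> n (\<alpha> n x) = x" and "x \<in> Cpow (a n) \<Longrightarrow> \<alpha> n (\<beta> n x) = x"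
  using assms unfolding iso_family_def by auto

lemma iso_family_Collect:
  assumes iso: "iso_family a \<alpha> \<beta>"
  shows "{x \<in> Cpow (a n). P (\<beta> n x)} = \<alpha> n ` {y \<in> Cpow (a n). P y}"
proof (intro Set.set_eqI iffI)
  fix x assume "x \<in> {x \<in> Cpow (a n). P (\<beta> n x)}"
  then have x: "x \<in> Cpow (a n)" "P (\<beta> n x)" by simp_all
  have "x = \<alpha> n (\<beta> n x)" using iso_familyD(4)[OF iso x(1)] by simp
  moreover have "\<beta> n x \<in> {y \<in> Cpow (a n). P y}" using x lmap_closed[OF iso_familyD(2)[OF iso]] by simp
  ultimately show "x \<in> \<alpha> n ` {y \<in> Cpow (a n). P y}" by (rule image_eqI)
next
  fix x assume "x \<in> \<alpha> n ` {y \<in> Cpow (a n). P y}"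
  then obtain y where y: "y \<in> Cpow (a n)" "P y" and x: "x = \<alpha> n y" by blast
  then show "x \<in> {x \<in> Cpow (a n). P (\<beta> n x)}"
    using lmap_closed[OF iso_familyD(1)[OF iso] y(1)] iso_familyD(3)[OF iso y(1)] by simp
qed

lemma iso_family_image:
  assumes "iso_family a \<alpha> \<beta>"
  shows "\<beta> n ` Cpow (a n) = Cpow (a n)"
proof
  show "\<beta> n ` Cpow (a n) \<subseteq> Cpow (a n)"
    by (rule image_subsetI) (rule lmap_closed[OF iso_familyD(2)[OF assms]])
  show "Cpow (a n) \<subseteq> \<beta> n ` Cpow (a n)"
  proof
    fix x assume x: "x \<in> Cpow (a n)"
    then have "x = \<beta> n (\<alpha> n x)" using iso_familyD(3)[OF assms] by simp
    then show "x \<in> \<beta> n ` Cpow (a n)" using lmap_closed[OF iso_familyD(1)[OF assms] x] by (rule image_eqI)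
  qed
qed

lemma iso_family_eq_vzero_iff:
  assumes "iso_family a \<alpha> \<beta>" and "y \<in> Cpow (a n)"
  shows "\<alpha> n y = vzero \<longleftrightarrow> y = vzero"
  using iso_familyD[OF assms(1)] assms(2) lmap_zero by metis

theorem pow_resolution_conjugate:
  assumes res: "pow_resolution R C N a d e" and iso: "iso_family a \<alpha> \<beta>"
  shows "pow_resolution R C N a (\<lambda>n x. \<alpha> (n - 1) (d n (\<beta> n x))) (\<lambda>x. e (\<beta> 0 x))"
proof -
  note \<alpha> = iso_familyD(1)[OF iso] and \<beta> = iso_familyD(2)[OF iso]
  note d = pow_resolution_lmap[OF res]
  have image: "(\<lambda>x. \<alpha> n (d (Suc n) (\<beta> (Suc n) x))) ` Cpow (a (Suc n))
      = \<alpha> n ` d (Suc n) ` Cpow (a (Suc n))"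
    for n
  proof -
    have "(\<lambda>x. \<alpha> n (d (Suc n) (\<beta> (Suc n) x))) ` Cpow (a (Suc n))
        = \<alpha> n ` d (Suc n) ` \<beta> (Suc n) ` Cpow (a (Suc n))" by (simp add: image_image)
    then show ?thesis by (simp only: iso_family_image[OF iso])
  qed
  show ?thesis
    unfolding pow_resolution_iff
  proof (intro conjI allI impI)
    fix n :: nat assume n: "1 \<le> n"
    show "lmap (a n) (a (n - 1)) (\<lambda>x. \<alpha> (n - 1) (d n (\<beta> n x)))"
      by (rule lmap_comp[OF lmap_comp[OF \<beta> d[OF n]] \<alpha>])
    have "{x \<in> Cpow (a n). \<alpha> (n - 1) (d n (\<beta> n x)) = vzero} = {x \<in> Cpow (a n). d n (\<beta> n x) = vzero}"
      using iso_family_eq_vzero_iff[OF iso lmap_closed[OF d[OF n] lmap_closed[OF \<beta>]]] by auto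
    also have "\<dots> = \<alpha> n ` d (Suc n) ` Cpow (a (Suc n))"
      by (simp only: iso_family_Collect[OF iso, of n "\<lambda>y. d n y = vzero"] pow_resolution_exact[OF res n])
    finally show "{x \<in> Cpow (a n). \<alpha> (n - 1) (d n (\<beta> n x)) = vzero}
        = (\<lambda>x. \<alpha> (Suc n - 1) (d (Suc n) (\<beta> (Suc n) x))) ` Cpow (a (Suc n))"
      by (simp add: image)
  next
    show "lin_map R (pow_mod C (a 0)) N (\<lambda>x. e (\<beta> 0 x))"
      by (rule lin_map_comp_lmap[OF pow_resolution_lin_map[OF res] \<beta>])
    have "(\<lambda>x. e (\<beta> 0 x)) ` Cpow (a 0) = e ` \<beta> 0 ` Cpow (a 0)" by (simp add: image_image)
    then show "(\<lambda>x. e (\<beta> 0 x)) ` Cpow (a 0) = carrier N"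
      by (simp only: iso_family_image[OF iso] pow_resolution_surj[OF res])
    have "{x \<in> Cpow (a 0). e (\<beta> 0 x) = \<zero>\<^bsub>N\<^esub>} = \<alpha> 0 ` d 1 ` Cpow (a 1)"
      by (simp only: iso_family_Collect[OF iso, of 0 "\<lambda>y. e y = \<zero>\<^bsub>N\<^esub>"] pow_resolution_ker[OF res])
    then show "{x \<in> Cpow (a 0). e (\<beta> 0 x) = \<zero>\<^bsub>N\<^esub>} = (\<lambda>x. \<alpha> (1 - 1) (d 1 (\<beta> 1 x))) ` Cpow (a 1)"
      using image[of 0] by simp
  qed
qed

lemma image_drop_last:
  assumes N: "abelian_group N" and f: "lin_map R (pow_mod C (Suc b)) N f"
    and kill: "\<And>c. c \<in> carrier C \<Longrightarrow> f (single b c) = \<zero>\<^bsub>N\<^esub>"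
  shows "f ` Cpow b = f ` Cpow (Suc b)"
proof
  show "f ` Cpow b \<subseteq> f ` Cpow (Suc b)" using Cpow_mono[of _ b "Suc b"] by auto
  show "f ` Cpow (Suc b) \<subseteq> f ` Cpow b"
  proof (rule image_subsetI)
    fix y assume y: "y \<in> Cpow (Suc b)"
    have y': "y(b := \<zero>\<^bsub>C\<^esub>) \<in> Cpow (Suc b)" using Cpow_mono[OF fun_upd_Cpow[OF y]] by simp
    have yb: "single b (y b) \<in> Cpow (Suc b)" by (rule single_Cpow[OF Cpow_coord[OF y]]) simp
    have "f y = f (vadd (y(b := \<zero>\<^bsub>C\<^esub>)) (single b (y b)))"
      by (rule arg_cong[OF Cpow_Suc_decomp[OF y]])
    also have "\<dots> = f (y(b := \<zero>\<^bsub>C\<^esub>)) \<oplus>\<^bsub>N\<^esub> f (single b (y b))"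
      using f y' yb unfolding lin_map_def pow_mod_add by blast
    also have "\<dots> = f (y(b := \<zero>\<^bsub>C\<^esub>))"
    proof -
      have "f (y(b := \<zero>\<^bsub>C\<^esub>)) \<in> carrier N" using f y' unfolding lin_map_def by blast
      then show ?thesis
        using kill[OF Cpow_coord[OF y, of b]] abelian_monoid.r_zero[OF abelian_group.axioms(1)[OF N]]
        by simp
    qed
    finally show "f y \<in> f ` Cpow b" using fun_upd_Cpow[OF y] by (rule image_eqI)
  qed
qed

end

text \<open>A resolution whose \<open>n\<close>-th differential \<open>C\<^bsup>a n\<^esup> \<rightarrow> C\<^bsup>a (n - 1)\<^esup>\<close> is block diagonal, with a unit
  as the \<open>1 \<times> 1\<close> block at the last coordinates. Dropping these two coordinates leaves a resolution.\<close>

locale unit_block_resolution =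
  local_homothety_module R C m for R :: "'a ring" and C :: "('a, 'c) module" and m +
  fixes M :: "('a, 'm) module" and a :: "nat \<Rightarrow> nat"
    and d :: "nat \<Rightarrow> (nat \<Rightarrow> 'c) \<Rightarrow> nat \<Rightarrow> 'c" and e :: "(nat \<Rightarrow> 'c) \<Rightarrow> 'm"
    and n A B :: nat and u :: 'a
  assumes resolution: "pow_resolution R C M a d e"
    and abelian_M: "abelian_group M"
    and n_pos: "1 \<le> n"
    and dim_n: "a n = Suc A" and dim_prev: "a (n - 1) = Suc B"
    and unit: "u \<in> Units R"
    and last_row: "\<And>x. x \<in> Cpow (Suc A) \<Longrightarrow> d n x B = u \<odot>\<^bsub>C\<^esub> x A"
    and last_col: "\<And>c. c \<in> carrier C \<Longrightarrow> d n (single A c) = single B (u \<odot>\<^bsub>C\<^esub> c)"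
begin

abbreviation a_trunc :: "nat \<Rightarrow> nat" where
  "a_trunc \<equiv> a(n := A, n - 1 := B)"

lemma n_neq_prev [simp]: "n \<noteq> n - 1" "n - 1 \<noteq> n" "n \<noteq> n - Suc 0" "n - Suc 0 \<noteq> n"
  using n_pos by auto

lemma Cpow_a_trunc_subset: "Cpow (a_trunc k) \<subseteq> Cpow (a k)"
  using Cpow_mono dim_n dim_prev by auto

lemma d_n: "lmap (Suc A) (Suc B) (d n)"
  using pow_resolution_lmap[OF resolution n_pos] dim_n dim_prev by simp

lemma d_n_last_zero: "x \<in> Cpow (Suc A) \<Longrightarrow> d n x B = \<zero>\<^bsub>C\<^esub> \<Longrightarrow> x \<in> Cpow A"
  using last_row smult_cancel_Units[OF unit Cpow_coord] Cpow_SucD by metis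

lemma d_n_restrict: "x \<in> Cpow A \<Longrightarrow> d n x \<in> Cpow B"
proof -
  assume x: "x \<in> Cpow A"
  then have xS: "x \<in> Cpow (Suc A)" using Cpow_mono by simp
  have "d n x B = \<zero>\<^bsub>C\<^esub>" using last_row[OF xS] x unit by (simp add: Cpow_iff R.Units_closed)
  then show "d n x \<in> Cpow B" by (rule Cpow_SucD[OF lmap_closed[OF d_n xS]])
qed

lemma d_next_image: "z \<in> Cpow (a (Suc n)) \<Longrightarrow> d (Suc n) z \<in> Cpow A"
proof -
  assume z: "z \<in> Cpow (a (Suc n))"
  have "d (Suc n) z \<in> Cpow (Suc A)"
    using lmap_closed[OF pow_resolution_lmap[OF resolution] z] dim_n by simp
  moreover have "d n (d (Suc n) z) B = \<zero>\<^bsub>C\<^esub>" using resolution_d_d[OF resolution n_pos z] by simp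
  ultimately show "d (Suc n) z \<in> Cpow A" by (rule d_n_last_zero)
qed

lemma single_B_boundary:
  assumes c: "c \<in> carrier C"
  shows "single B c = d n (single A (inv\<^bsub>R\<^esub> u \<odot>\<^bsub>C\<^esub> c))"
proof -
  have "u \<odot>\<^bsub>C\<^esub> (inv\<^bsub>R\<^esub> u \<odot>\<^bsub>C\<^esub> c) = c"
    using c unit by (simp add: smult_assoc1[symmetric] R.Units_closed)
  then show ?thesis using last_col[of "inv\<^bsub>R\<^esub> u \<odot>\<^bsub>C\<^esub> c"] c unit by simp
qed

lemma prev_kills_single_B:
  assumes c: "c \<in> carrier C" and n: "2 \<le> n"
  shows "d (n - 1) (single B c) = vzero"
proof -
  have "single A (inv\<^bsub>R\<^esub> u \<odot>\<^bsub>C\<^esub> c) \<in> Cpow (a (Suc (n - 1)))"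
    using c unit dim_n n by (intro single_Cpow) auto
  then have "d (n - 1) (d (Suc (n - 1)) (single A (inv\<^bsub>R\<^esub> u \<odot>\<^bsub>C\<^esub> c))) = vzero"
    by (rule resolution_d_d[OF resolution, rotated]) (use n in simp)
  moreover have "Suc (n - 1) = n" using n by simp
  ultimately show ?thesis using single_B_boundary[OF c] by simp
qed

lemma augmentation_kills_single_B:
  assumes c: "c \<in> carrier C" and n: "n = 1"
  shows "e (single B c) = \<zero>\<^bsub>M\<^esub>"
proof -
  have "single A (inv\<^bsub>R\<^esub> u \<odot>\<^bsub>C\<^esub> c) \<in> Cpow (a 1)"
    using c unit dim_n n by (intro single_Cpow) auto
  then show ?thesis
    using resolution_e_d[OF resolution] single_B_boundary[OF c] n by simp
qed

lemma image_d_n_trunc: "d n ` Cpow A = d n ` Cpow (Suc A) \<inter> Cpow B"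
proof
  show "d n ` Cpow A \<subseteq> d n ` Cpow (Suc A) \<inter> Cpow B"
    using d_n_restrict Cpow_mono[of _ A "Suc A"] by auto
  show "d n ` Cpow (Suc A) \<inter> Cpow B \<subseteq> d n ` Cpow A"
    using d_n_last_zero by (force simp: Cpow_iff)
qed

lemma image_prev_trunc:
  assumes n: "2 \<le> n"
  shows "d (n - 1) ` Cpow B = d (n - 1) ` Cpow (Suc B)"
proof (rule image_drop_last[OF abelian_group_pow_mod])
  have "lmap (a (n - 1)) (a (n - 1 - 1)) (d (n - 1))"
    using pow_resolution_lmap[OF resolution, of "n - 1"] n by simp
  then show "lin_map R (pow_mod C (Suc B)) (pow_mod C (a (n - 1 - 1))) (d (n - 1))"
    using dim_prev by (simp add: lin_map_pow_mod_iff)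
  show "d (n - 1) (single B c) = \<zero>\<^bsub>pow_mod C (a (n - 1 - 1))\<^esub>" if "c \<in> carrier C" for c
    using prev_kills_single_B[OF that n] by (simp add: pow_mod_zero)
qed

lemma image_d_trunc:
  "d (Suc k) ` Cpow (a_trunc (Suc k)) = d (Suc k) ` Cpow (a (Suc k)) \<inter> Cpow (a_trunc k)"
proof -
  have image_sub: "d (Suc k) ` Cpow (a (Suc k)) \<subseteq> Cpow (a k)"
    using lmap_closed[OF pow_resolution_lmap[OF resolution, of "Suc k"]] by auto
  consider "Suc k = n" | "k = n" | "Suc k = n - 1" | "Suc k \<noteq> n" "k \<noteq> n" "Suc k \<noteq> n - 1"
    by blast
  then show ?thesis
  proof cases
    case 1
    then have "a_trunc (Suc k) = A" "a_trunc k = B" "a (Suc k) = Suc A" using dim_n by auto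
    then show ?thesis using 1 image_d_n_trunc by simp
  next
    case 2
    then have "a_trunc (Suc k) = a (Suc k)" "a_trunc k = A" by auto
    then show ?thesis using 2 d_next_image by auto
  next
    case 3
    then have "a_trunc (Suc k) = B" "a_trunc k = a k" "a (Suc k) = Suc B" "2 \<le> n"
      using dim_prev by auto
    then show ?thesis using 3 image_sub image_prev_trunc by auto
  next
    case 4
    then have "a_trunc (Suc k) = a (Suc k)" "a_trunc k = a k" by auto
    then show ?thesis using image_sub by auto
  qed
qed

theorem pow_resolution_truncate: "pow_resolution R C M a_trunc d e"
  unfolding pow_resolution_iff
proof (intro conjI allI impI)
  fix k :: nat assume k: "1 \<le> k"
  show "lmap (a_trunc k) (a_trunc (k - 1)) (d k)"
  proof (rule lmap_codom[OF lmap_restrict[OF pow_resolution_lmap[OF resolution k]]])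
    show "a_trunc k \<le> a k" using dim_n dim_prev by auto
    fix x assume x: "x \<in> Cpow (a_trunc k)"
    obtain k' where k': "k = Suc k'" using k by (cases k) auto
    have "d k x \<in> d (Suc k') ` Cpow (a_trunc (Suc k'))" using x unfolding k' by (rule imageI)
    then show "d k x \<in> Cpow (a_trunc (k - 1))" unfolding image_d_trunc k' diff_Suc_1 by blast
  qed
  have "{x \<in> Cpow (a_trunc k). d k x = vzero} = {x \<in> Cpow (a k). d k x = vzero} \<inter> Cpow (a_trunc k)"
    using Cpow_a_trunc_subset[of k] by blast
  then show "{x \<in> Cpow (a_trunc k). d k x = vzero} = d (Suc k) ` Cpow (a_trunc (Suc k))"
    by (simp only: pow_resolution_exact[OF resolution k] image_d_trunc)
next
  show "lin_map R (pow_mod C (a_trunc 0)) M e"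
    using lin_map_pow_mod_restrict[OF pow_resolution_lin_map[OF resolution]] dim_prev by auto
  show "e ` Cpow (a_trunc 0) = carrier M"
  proof (cases "n = 1")
    case True
    then have "e ` Cpow B = e ` Cpow (Suc B)"
      using image_drop_last[OF abelian_M] pow_resolution_lin_map[OF resolution] dim_prev
        augmentation_kills_single_B by simp
    then show ?thesis using True pow_resolution_surj[OF resolution] dim_prev by simp
  next
    case False
    then show ?thesis using pow_resolution_surj[OF resolution] n_pos by simp
  qed
  have "{x \<in> Cpow (a_trunc 0). e x = \<zero>\<^bsub>M\<^esub>} = {x \<in> Cpow (a 0). e x = \<zero>\<^bsub>M\<^esub>} \<inter> Cpow (a_trunc 0)"
    using Cpow_a_trunc_subset[of 0] by blast
  then show "{x \<in> Cpow (a_trunc 0). e x = \<zero>\<^bsub>M\<^esub>} = d 1 ` Cpow (a_trunc 1)"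
    using image_d_trunc[of 0] by (simp only: pow_resolution_ker[OF resolution] One_nat_def)
qed

end

context local_homothety_module
begin

lemma pow_resolution_move_pivot:
  assumes res: "pow_resolution R C N a d e" and n: "1 \<le> n"
    and A: "a n = Suc A" and B: "a (n - 1) = Suc B" and i: "i < a n" and j: "j < a (n - 1)"
  obtains d' e' where "pow_resolution R C N a d' e'" and "entry (d' n) A B = entry (d n) i j"
proof -
  have nn: "n - 1 \<noteq> n" using n by simp
  define \<sigma> :: "nat \<Rightarrow> (nat \<Rightarrow> 'c) \<Rightarrow> nat \<Rightarrow> 'c"
    where "\<sigma> = (\<lambda>k x. x)(n := swap_coords i A, n - 1 := swap_coords j B)"
  have "iso_family a \<sigma> \<sigma>"
    unfolding \<sigma>_def using i j A B
    by (intro iso_family_update iso_family_id lmap_swap_coords) (simp_all add: swap_coords_involution)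
  then have res': "pow_resolution R C N a (\<lambda>k x. \<sigma> (k - 1) (d k (\<sigma> k x))) (\<lambda>x. e (\<sigma> 0 x))"
    by (rule pow_resolution_conjugate[OF res])
  have d_n: "lmap (a n) (a (n - 1)) (d n)" by (rule pow_resolution_lmap[OF res n])
  have "entry (\<lambda>x. \<sigma> (n - 1) (d n (\<sigma> n x))) A B = entry (d n) i j"
  proof (rule entry_eqI[OF entry_closed[OF d_n i]])
    fix c assume c: "c \<in> carrier C"
    have "\<sigma> n (single A c) = single i c" unfolding \<sigma>_def using nn by (simp add: swap_coords_single)
    moreover have "\<sigma> (n - 1) y B = y j" for y unfolding \<sigma>_def swap_coords_def by simp
    ultimately show "\<sigma> (n - 1) (d n (\<sigma> n (single A c))) B = entry (d n) i j \<odot>\<^bsub>C\<^esub> c"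
      using entry_single[OF d_n i c] by simp
  qed
  with res' show thesis by (intro that) auto
qed

lemma pow_resolution_clear_pivot:
  assumes res: "pow_resolution R C N a d e" and n: "1 \<le> n"
    and A: "a n = Suc A" and B: "a (n - 1) = Suc B" and u: "entry (d n) A B \<in> Units R"
  obtains d' e' where "pow_resolution R C N a d' e'"
    and "\<And>x. x \<in> Cpow (Suc A) \<Longrightarrow> d' n x B = entry (d n) A B \<odot>\<^bsub>C\<^esub> x A"
    and "\<And>c. c \<in> carrier C \<Longrightarrow> d' n (single A c) = single B (entry (d n) A B \<odot>\<^bsub>C\<^esub> c)"
proof -
  let ?u = "entry (d n) A B"
  have nn: "n - 1 \<noteq> n" using n by simp
  have D: "lmap (Suc A) (Suc B) (d n)" using pow_resolution_lmap[OF res n] A B by simp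
  define s where "s = \<ominus>\<^bsub>R\<^esub> (inv\<^bsub>R\<^esub> ?u)"
  have s: "s \<in> carrier R" "inv\<^bsub>R\<^esub> ?u \<in> carrier R" "?u \<otimes>\<^bsub>R\<^esub> s = \<ominus>\<^bsub>R\<^esub> \<one>\<^bsub>R\<^esub>" "s \<otimes>\<^bsub>R\<^esub> ?u = \<ominus>\<^bsub>R\<^esub> \<one>\<^bsub>R\<^esub>"
    "s \<oplus>\<^bsub>R\<^esub> inv\<^bsub>R\<^esub> ?u = \<zero>\<^bsub>R\<^esub>" "inv\<^bsub>R\<^esub> ?u \<oplus>\<^bsub>R\<^esub> s = \<zero>\<^bsub>R\<^esub>"
    unfolding s_def using Units_neg_inv[OF u] u by (auto simp: R.l_neg R.r_neg)
  define \<alpha> :: "nat \<Rightarrow> (nat \<Rightarrow> 'c) \<Rightarrow> nat \<Rightarrow> 'c"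
    where "\<alpha> = (\<lambda>k x. x)(n := clear_row A B (d n) (inv\<^bsub>R\<^esub> ?u), n - 1 := clear_col A B (d n) s)"
  define \<beta> :: "nat \<Rightarrow> (nat \<Rightarrow> 'c) \<Rightarrow> nat \<Rightarrow> 'c"
    where "\<beta> = (\<lambda>k x. x)(n := clear_row A B (d n) s, n - 1 := clear_col A B (d n) (inv\<^bsub>R\<^esub> ?u))"
  have "iso_family a \<alpha> \<beta>"
    unfolding \<alpha>_def \<beta>_def using A B s
    by (intro iso_family_update iso_family_id)
      (simp_all add: lmap_clear_row[OF D] lmap_clear_col[OF D] clear_row_inverse[OF D]
        clear_col_inverse[OF D])
  then have res': "pow_resolution R C N a (\<lambda>k x. \<alpha> (k - 1) (d k (\<beta> k x))) (\<lambda>x. e (\<beta> 0 x))"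
    by (rule pow_resolution_conjugate[OF res])
  have d'_n: "\<alpha> (n - 1) (d n (\<beta> n x)) = clear_col A B (d n) s (d n (clear_row A B (d n) s x))" for x
    unfolding \<alpha>_def \<beta>_def using nn by simp
  show thesis
  proof (rule that[OF res'], unfold d'_n)
    fix x assume x: "x \<in> Cpow (Suc A)"
    have "d n (clear_row A B (d n) s x) \<in> Cpow (Suc B)"
      by (rule lmap_closed[OF D lmap_closed[OF lmap_clear_row[OF D s(1)] x]])
    then show "clear_col A B (d n) s (d n (clear_row A B (d n) s x)) B = ?u \<odot>\<^bsub>C\<^esub> x A"
      using last_clear_row[OF D refl s(1,3) x] by (simp add: clear_col_last)
  next
    fix c assume c: "c \<in> carrier C"
    then show "clear_col A B (d n) s (d n (clear_row A B (d n) s (single A c))) = single B (?u \<odot>\<^bsub>C\<^esub> c)"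
      using clear_row_single[OF D s(1) c] clear_col_single[OF D refl s(1,4) c] by simp
  qed
qed

lemma pow_resolution_reduce:
  fixes N :: "('a, 'm) module"
  assumes res: "pow_resolution R C N a d e" and N: "abelian_group N" and n: "1 \<le> n"
    and i: "i < a n" and j: "j < a (n - 1)" and pivot: "entry (d n) i j \<notin> m"
  shows "\<exists>d' e'. pow_resolution R C N (a(n := a n - 1, n - 1 := a (n - 1) - 1)) d' e'"
proof -
  obtain A where A: "a n = Suc A" using i by (cases "a n") auto
  obtain B where B: "a (n - 1) = Suc B" using j by (cases "a (n - 1)") auto
  obtain d1 e1 where res1: "pow_resolution R C N a d1 e1" and u: "entry (d1 n) A B = entry (d n) i j"
    by (rule pow_resolution_move_pivot[OF res n A B i j])
  have "entry (d n) i j \<in> Units R"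
    by (rule nonmember_Units[OF entry_closed[OF pow_resolution_lmap[OF res n] i] pivot])
  then have unit: "entry (d1 n) A B \<in> Units R" by (simp only: u)
  obtain d2 e2 where res2: "pow_resolution R C N a d2 e2"
    and row: "\<And>x. x \<in> Cpow (Suc A) \<Longrightarrow> d2 n x B = entry (d1 n) A B \<odot>\<^bsub>C\<^esub> x A"
    and col: "\<And>c. c \<in> carrier C \<Longrightarrow> d2 n (single A c) = single B (entry (d1 n) A B \<odot>\<^bsub>C\<^esub> c)"
    using pow_resolution_clear_pivot[OF res1 n A B unit] by blast
  interpret unit_block_resolution R C m N a d2 e2 n A B "entry (d1 n) A B"
    by intro_locales (rule unit_block_resolution_axioms.intro[OF res2 N n A B unit row col])
  show ?thesis using pow_resolution_truncate A B by auto
qed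

theorem minimal_resolution_exists:
  fixes N :: "('a, 'm) module"
  assumes N: "abelian_group N"
  shows "pow_resolution R C N a d e \<Longrightarrow> \<forall>k\<ge>K. a k = 0 \<Longrightarrow>
    \<exists>a d e. pow_resolution R C N a d e \<and> minimal_cx R C a d"
proof (induction "\<Sum>k<K. a k" arbitrary: a d e rule: less_induct)
  case less
  note res = less.prems(1)
  show ?case
  proof (cases "\<forall>n\<ge>1. residually_zero (a n) (a (n - 1)) (d n)")
    case True
    have "minimal_cx R C a d"
    proof (rule minimal_cx_if_residually_zero)
      show "lmap (a n) (a (n - 1)) (d n)" if "1 \<le> n" for n by (rule pow_resolution_lmap[OF res that])
      show "residually_zero (a n) (a (n - 1)) (d n)" if "1 \<le> n" for n using True that by blast
    qed
    with res show ?thesis by blast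
  next
    case False
    then obtain n i j where n: "1 \<le> n" and i: "i < a n" and j: "j < a (n - 1)"
      and pivot: "entry (d n) i j \<notin> m"
      unfolding residually_zero_def by blast
    define a' where "a' = a(n := a n - 1, n - 1 := a (n - 1) - 1)"
    obtain d' e' where res': "pow_resolution R C N a' d' e'"
      using pow_resolution_reduce[OF res N n i j pivot] unfolding a'_def by blast
    have le: "a' k \<le> a k" for k unfolding a'_def by simp
    have "n < K"
    proof (rule ccontr)
      assume "\<not> n < K"
      then have "a n = 0" using less.prems(2) by simp
      with i show False by simp
    qed
    moreover have "a' n < a n" unfolding a'_def using n i by simp
    ultimately have "(\<Sum>k<K. a' k) < (\<Sum>k<K. a k)"
      using le by (intro sum_strict_mono_ex1) auto
    moreover have "\<forall>k\<ge>K. a' k = 0"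
      using less.prems(2) le le_zero_eq by metis
    ultimately show ?thesis by (rule less.hyps[OF _ res'])
  qed
qed

lemma carrier_nontrivial: "\<exists>c\<in>carrier C. c \<noteq> \<zero>\<^bsub>C\<^esub>"
proof (rule ccontr)
  assume "\<not> (\<exists>c\<in>carrier C. c \<noteq> \<zero>\<^bsub>C\<^esub>)"
  then have "\<zero>\<^bsub>R\<^esub> = homothety_coeff (\<lambda>c. c)" "\<one>\<^bsub>R\<^esub> = homothety_coeff (\<lambda>c. c)"
    by (auto intro!: homothety_coeff_eqI[symmetric])
  then show False using one_notin_max max.zero_closed by simp
qed

lemma bounded_cx_eventually_zero:
  assumes "bounded_cx C a"
  obtains K where "\<forall>k\<ge>K. a k = 0"
proof -
  obtain K where K: "\<And>k. K \<le> k \<Longrightarrow> Cpow (a k) = {vzero}"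
    using assms unfolding bounded_cx_def pow_mod_zero by blast
  obtain c where c: "c \<in> carrier C" "c \<noteq> \<zero>\<^bsub>C\<^esub>" using carrier_nontrivial by blast
  have "a k = 0" if k: "K \<le> k" for k
  proof (rule ccontr)
    assume "a k \<noteq> 0"
    then have "single 0 c \<in> Cpow (a k)" using single_Cpow[OF c(1)] by simp
    then have "single 0 c 0 = \<zero>\<^bsub>C\<^esub>" using K[OF k] by simp
    with c(2) show False by (simp add: single_def)
  qed
  then show thesis using that by blast
qed

end

theorem lemma4p9:
  fixes R :: "'a ring" and C :: "('a, 'c) module" and M :: "('a, 'm) module"
  assumes "cring R" and "noetherian_ring R" and "local_ring R"
    and "semidualizing R C"
    and "module R M" and "fin_gen R M"
    and "\<exists>a d e. PCf_resolution R C M a d e \<and> bounded_cx C a"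
  shows "\<exists>a d e. PCf_resolution R C M a d e \<and> minimal_cx R C a d"
proof -
  obtain a d e where res: "pow_resolution R C M a d e" and bounded: "bounded_cx C a"
    using assms(7) by blast
  obtain m where m: "maximalideal m R" and unique: "\<And>I. maximalideal I R \<Longrightarrow> I = m"
    using assms(3) unfolding local_ring_def by blast
  interpret local_homothety_module R C m
  proof (rule local_homothety_module.intro[OF _ local_homothety_module_axioms.intro[OF m]])
    show "module R C" "homothety_iso R C" using assms(4) unfolding semidualizing_def by blast+
    show "\<And>x. x \<in> carrier R \<Longrightarrow> x \<notin> m \<Longrightarrow> x \<in> Units R"
      using cring.local_ring_nonmember_Units[OF assms(1) m unique] by blast
  qed
  obtain K where "\<forall>k\<ge>K. a k = 0" by (rule bounded_cx_eventually_zero[OF bounded])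
  then show ?thesis
    using minimal_resolution_exists[OF module.axioms(2)[OF assms(5)] res] by blast
qed

end
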